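(* Let $k, n$ be integers with $2 \le k \le n$ and let $\xi$ be a transcendental real number. Then $$\lambda_n (\xi) \ge \frac{w_k^{\rm lead} (\xi) - n + k}{(k-1) w_k^{\rm lead} (\xi) + n}.$$ Furthermore, this inequality remains true with $w_k^{\rm lead}(\xi)$ replaced by $w_k(\xi)$ when $k=2$ or when $n = k+1$.
   Context: For an integer $n \ge 1$ and a real number $\xi$, $\lambda_n(\xi)$ denotes the supremum (possibly $+\infty$) of the real numbers $\lambda$ such that, for arbitrarily large real numbers $X$, the inequalities $0 < |x_0| \le X$, $\max_{1 \le m \le n} |x_0 \xi^m - x_m| \le X^{-\lambda}$ have a solution in integers $x_0, \ldots, x_n$. For an integer $k\ge1$, $w_k(\xi)$ denotes the supremum of the real numbers $w$ such that, for arbitrarily large real numbers $X$, the inequalities $0 < |x_k \xi^k + \cdots + x_1\xi + x_0| \le X^{-w}$, $\max_{0\le j\le k}|x_j| \le X$ have a solution in integers $x_0,\ldots,x_k$; $w_k^{\rm lead}(\xi)$ is defined in the same way but with the additional requirement that $|x_k| \ge |x_j|$ for all $0 \le j \le k-1$. When the relevant exponent $w$ is $+\infty$, the right-hand side $\frac{w-n+k}{(k-1)w+n}$ is interpreted as its limit $1/(k-1)$. *)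

theory Defs
  imports "HOL-Analysis.Analysis" "HOL-Computational_Algebra.Polynomial"
    "HOL-Library.Extended_Real"
begin

definition lambda_exp :: "nat \<Rightarrow> real \<Rightarrow> ereal" where
  "lambda_exp n \<xi> = Sup (ereal ` {lam. \<forall>X0. \<exists>X\<ge>X0. \<exists>x :: nat \<Rightarrow> int.
      0 < \<bar>x 0\<bar> \<and> \<bar>real_of_int (x 0)\<bar> \<le> X \<and>
      (\<forall>m\<in>{1..n}. \<bar>real_of_int (x 0) * \<xi> ^ m - real_of_int (x m)\<bar> \<le> X powr (- lam))})"

definition w_exp :: "nat \<Rightarrow> real \<Rightarrow> ereal" where
  "w_exp k \<xi> = Sup (ereal ` {w. \<forall>X0. \<exists>X\<ge>X0. \<exists>x :: nat \<Rightarrow> int.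
      0 < \<bar>\<Sum>j\<le>k. real_of_int (x j) * \<xi> ^ j\<bar> \<and>
      \<bar>\<Sum>j\<le>k. real_of_int (x j) * \<xi> ^ j\<bar> \<le> X powr (- w) \<and>
      (\<forall>j\<le>k. \<bar>real_of_int (x j)\<bar> \<le> X)})"

definition w_lead_exp :: "nat \<Rightarrow> real \<Rightarrow> ereal" where
  "w_lead_exp k \<xi> = Sup (ereal ` {w. \<forall>X0. \<exists>X\<ge>X0. \<exists>x :: nat \<Rightarrow> int.
      0 < \<bar>\<Sum>j\<le>k. real_of_int (x j) * \<xi> ^ j\<bar> \<and>
      \<bar>\<Sum>j\<le>k. real_of_int (x j) * \<xi> ^ j\<bar> \<le> X powr (- w) \<and>
      (\<forall>j\<le>k. \<bar>real_of_int (x j)\<bar> \<le> X) \<and>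
      (\<forall>j<k. \<bar>x j\<bar> \<le> \<bar>x k\<bar>)})"

definition bound_fun :: "nat \<Rightarrow> nat \<Rightarrow> ereal \<Rightarrow> ereal" where
  "bound_fun n k w = (case w of
      ereal r \<Rightarrow> ereal ((r - real n + real k) / ((real k - 1) * r + real n))
    | PInfty \<Rightarrow> ereal (1 / (real k - 1))
    | MInfty \<Rightarrow> -\<infinity>)"

end

theory Submission
  imports Defs "HOL-Real_Asymp.Real_Asymp"
begin

text \<open>Let \<open>P = \<Sum>i\<le>k. a i * X ^ i\<close> have height \<open>H\<close> and \<open>\<bar>P \<xi>\<bar> \<le> H powr - w\<close>, and write
  \<open>P - P \<xi> = (X - \<xi>) * (\<Sum>r<k. b r * X ^ r)\<close>. Dirichlet's box principle applied to the points
  \<open>(\<lfloor>t * \<xi> ^ m\<rfloor>)\<close>, \<open>m \<le> n\<close>, \<open>0 \<le> t \<le> M\<close>, yields an integer vector \<open>y\<close> with \<open>0 < y 0 \<le> M\<close> such that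
  \<open>g l = \<xi> * y l - y (l + 1)\<close> is tiny for \<open>l\<close> in a set \<open>F\<close> of \<open>k - 1\<close> indices and
  \<open>\<Sum>i\<le>k. a i * y (i + j) = 0\<close> for \<open>j \<le> n - k\<close>. The latter equations become the banded Toeplitz
  system \<open>\<Sum>r<k. b r * g (j + r) = y j * P \<xi>\<close> with small right-hand sides. When this system,
  completed by the coordinates in \<open>F\<close>, is well conditioned on the scale \<open>H\<close>, all \<open>g l\<close> are small,
  hence so are the \<open>y 0 * \<xi> ^ m - y m\<close>. A dominant leading coefficient makes the system
  triangular; for \<open>k = 2\<close> or \<open>n = k + 1\<close> a suitable \<open>F\<close> exists for every \<open>P\<close>. Taking
  \<open>\<epsilon> = H powr - \<beta>\<close> and \<open>M \<approx> H powr \<gamma>\<close> balances the number of boxes against the error and gives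
  the exponent \<open>(w - n + k) / ((k - 1) * w + n)\<close>.\<close>

section \<open>Polynomials and their quotient by \<open>X - \<xi>\<close>\<close>

definition poly_val :: "(nat \<Rightarrow> int) \<Rightarrow> real \<Rightarrow> nat \<Rightarrow> real" where
  "poly_val a \<xi> k = (\<Sum>i\<le>k. real_of_int (a i) * \<xi> ^ i)"

text \<open>For \<open>P = \<Sum>i\<le>k. a i * X ^ i\<close>, \<open>quot_coeff a \<xi> k r\<close> is the coefficient of \<open>X ^ r\<close>
  in the polynomial \<open>(P - P \<xi>) / (X - \<xi>)\<close>.\<close>
definition quot_coeff :: "(nat \<Rightarrow> int) \<Rightarrow> real \<Rightarrow> nat \<Rightarrow> nat \<Rightarrow> real" where
  "quot_coeff a \<xi> k r = (\<Sum>i\<in>{Suc r..k}. real_of_int (a i) * \<xi> ^ (i - Suc r))"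

lemma sum_power_telescope:
  fixes z :: "nat \<Rightarrow> real"
  shows "(\<Sum>r<i. \<xi> ^ (i - Suc r) * (\<xi> * z r - z (Suc r))) = \<xi> ^ i * z 0 - z i"
proof (induction i)
  case 0
  then show ?case by simp
next
  case (Suc i)
  have "(\<Sum>r<Suc i. \<xi> ^ (Suc i - Suc r) * (\<xi> * z r - z (Suc r)))
      = (\<Sum>r<i. \<xi> * (\<xi> ^ (i - Suc r) * (\<xi> * z r - z (Suc r)))) + (\<xi> * z i - z (Suc i))"
    by (auto intro!: sum.cong simp: Suc_diff_Suc power_Suc[symmetric] mult.assoc)
  also have "\<dots> = \<xi> * (\<xi> ^ i * z 0 - z i) + (\<xi> * z i - z (Suc i))"
    by (simp add: sum_distrib_left[symmetric] Suc.IH)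
  finally show ?case by (simp add: algebra_simps)
qed

lemma quot_coeff_identity:
  fixes z :: "nat \<Rightarrow> real"
  shows "(\<Sum>r<k. quot_coeff a \<xi> k r * (\<xi> * z (j + r) - z (j + Suc r)))
       = z j * poly_val a \<xi> k - (\<Sum>i\<le>k. real_of_int (a i) * z (i + j))"
proof -
  have "(\<Sum>r<k. quot_coeff a \<xi> k r * (\<xi> * z (j + r) - z (j + Suc r)))
     = (\<Sum>r<k. \<Sum>i\<in>{Suc r..k}. real_of_int (a i) * (\<xi> ^ (i - Suc r) * (\<xi> * z (j + r) - z (j + Suc r))))"
    by (simp add: quot_coeff_def sum_distrib_right mult.assoc)
  also have "\<dots> = (\<Sum>i\<le>k. \<Sum>r<i. real_of_int (a i) * (\<xi> ^ (i - Suc r) * (\<xi> * z (j + r) - z (j + Suc r))))"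
    by (rule sum.nested_swap'[symmetric])
  also have "\<dots> = (\<Sum>i\<le>k. real_of_int (a i) * (\<xi> ^ i * z j - z (i + j)))"
    using sum_power_telescope[where z = "\<lambda>r. z (j + r)"]
    by (simp add: sum_distrib_left[symmetric] add.commute)
  also have "\<dots> = z j * poly_val a \<xi> k - (\<Sum>i\<le>k. real_of_int (a i) * z (i + j))"
    by (simp add: poly_val_def algebra_simps sum_subtractf sum_distrib_left)
  finally show ?thesis .
qed

lemma quot_coeff_eq_0: "k \<le> r \<Longrightarrow> quot_coeff a \<xi> k r = 0"
  by (simp add: quot_coeff_def)

lemma quot_coeff_top: "1 \<le> k \<Longrightarrow> quot_coeff a \<xi> k (k - 1) = real_of_int (a k)"
  by (simp add: quot_coeff_def)

lemma poly_val_eq_quot_coeff_0: "poly_val a \<xi> k = real_of_int (a 0) + \<xi> * quot_coeff a \<xi> k 0"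
proof -
  have "{..k} = insert 0 {Suc 0..k}" by auto
  then have "poly_val a \<xi> k = real_of_int (a 0) + (\<Sum>i\<in>{Suc 0..k}. real_of_int (a i) * \<xi> ^ i)"
    by (simp add: poly_val_def)
  also have "(\<Sum>i\<in>{Suc 0..k}. real_of_int (a i) * \<xi> ^ i) = \<xi> * quot_coeff a \<xi> k 0"
    unfolding quot_coeff_def sum_distrib_left
    by (intro sum.cong refl) (auto simp: algebra_simps simp flip: power_Suc)
  finally show ?thesis .
qed

lemma quot_coeff_pred:
  assumes "1 \<le> r" "r \<le> k"
  shows "quot_coeff a \<xi> k (r - 1) = real_of_int (a r) + \<xi> * quot_coeff a \<xi> k r"
proof -
  have "{Suc (r - 1)..k} = insert r {Suc r..k}" using assms by auto
  then have "quot_coeff a \<xi> k (r - 1)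
      = real_of_int (a r) + (\<Sum>i\<in>{Suc r..k}. real_of_int (a i) * \<xi> ^ (i - r))"
    using assms by (simp add: quot_coeff_def)
  also have "(\<Sum>i\<in>{Suc r..k}. real_of_int (a i) * \<xi> ^ (i - r)) = \<xi> * quot_coeff a \<xi> k r"
    unfolding quot_coeff_def sum_distrib_left
    by (intro sum.cong refl) (auto simp: algebra_simps Suc_diff_Suc simp flip: power_Suc)
  finally show ?thesis .
qed

lemma abs_quot_coeff_le:
  assumes "\<forall>i\<le>k. \<bar>real_of_int (a i)\<bar> \<le> H"
  shows "\<bar>quot_coeff a \<xi> k r\<bar> \<le> (real k + 1) * (max 1 \<bar>\<xi>\<bar>) ^ k * H"
proof -
  have H0: "0 \<le> H" using assms by (meson abs_ge_zero order.trans order_refl)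
  have "\<bar>quot_coeff a \<xi> k r\<bar> \<le> (\<Sum>i\<in>{Suc r..k}. \<bar>real_of_int (a i) * \<xi> ^ (i - Suc r)\<bar>)"
    unfolding quot_coeff_def by (rule sum_abs)
  also have "\<dots> \<le> (\<Sum>i\<in>{Suc r..k}. H * (max 1 \<bar>\<xi>\<bar>) ^ k)"
  proof (rule sum_mono)
    fix i assume i: "i \<in> {Suc r..k}"
    have "\<bar>\<xi>\<bar> ^ (i - Suc r) \<le> (max 1 \<bar>\<xi>\<bar>) ^ (i - Suc r)" by (simp add: power_mono)
    also have "\<dots> \<le> (max 1 \<bar>\<xi>\<bar>) ^ k" using i by (intro power_increasing) auto
    finally show "\<bar>real_of_int (a i) * \<xi> ^ (i - Suc r)\<bar> \<le> H * (max 1 \<bar>\<xi>\<bar>) ^ k"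
      unfolding abs_mult power_abs using assms i H0 by (intro mult_mono) auto
  qed
  also have "\<dots> = real (card {Suc r..k}) * H * (max 1 \<bar>\<xi>\<bar>) ^ k" by simp
  also have "\<dots> \<le> (real k + 1) * H * (max 1 \<bar>\<xi>\<bar>) ^ k"
    using H0 by (intro mult_right_mono) auto
  finally show ?thesis by (simp add: mult_ac)
qed

text \<open>With \<open>b = quot_coeff a \<xi> k\<close>: \<open>a i = b (i - 1) - \<xi> * b i\<close> for \<open>i > 0\<close> and
  \<open>a 0 = P \<xi> - \<xi> * b 0\<close>.\<close>
lemma coeff_le_quot_coeff:
  assumes "i \<le> k" "1 \<le> k" and small: "\<bar>poly_val a \<xi> k\<bar> \<le> \<bar>real_of_int (a i)\<bar> / 2"
    and B: "\<forall>r<k. \<bar>quot_coeff a \<xi> k r\<bar> \<le> B"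
  shows "\<bar>real_of_int (a i)\<bar> \<le> 2 * (1 + \<bar>\<xi>\<bar>) * B"
proof -
  have B0: "0 \<le> B" using B \<open>1 \<le> k\<close> abs_ge_zero[of "quot_coeff a \<xi> k 0"] by force
  have bound: "\<bar>\<xi> * quot_coeff a \<xi> k r\<bar> \<le> \<bar>\<xi>\<bar> * B" for r
    using B B0 quot_coeff_eq_0[of k r] by (cases "r < k") (auto simp: abs_mult mult_left_mono)
  show ?thesis
  proof (cases "i = 0")
    case True
    have "\<bar>real_of_int (a 0)\<bar> \<le> \<bar>poly_val a \<xi> k\<bar> + \<bar>\<xi> * quot_coeff a \<xi> k 0\<bar>"
      using poly_val_eq_quot_coeff_0[of a \<xi> k] by linarith
    moreover have "\<bar>real_of_int (a 0)\<bar> / 2 + \<bar>\<xi>\<bar> * B \<le> \<bar>real_of_int (a 0)\<bar> / 2 + (1 + \<bar>\<xi>\<bar>) * B"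
      using B0 by (simp add: algebra_simps)
    ultimately show ?thesis using small bound[of 0] unfolding True by linarith
  next
    case False
    then have "\<bar>real_of_int (a i)\<bar> \<le> \<bar>quot_coeff a \<xi> k (i - 1)\<bar> + \<bar>\<xi> * quot_coeff a \<xi> k i\<bar>"
      using quot_coeff_pred[of i k a \<xi>] assms(1) by linarith
    moreover have "\<bar>quot_coeff a \<xi> k (i - 1)\<bar> \<le> B" using B False assms(1) by auto
    moreover have "B + \<bar>\<xi>\<bar> * B \<le> 2 * (1 + \<bar>\<xi>\<bar>) * B" using B0 by (simp add: algebra_simps)
    ultimately show ?thesis using bound[of i] by linarith
  qed
qed

section \<open>Conditioning of banded Toeplitz systems\<close>

definition toeplitz_stable :: "(nat \<Rightarrow> real) \<Rightarrow> nat \<Rightarrow> nat \<Rightarrow> nat set \<Rightarrow> real \<Rightarrow> real \<Rightarrow> bool" where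
  "toeplitz_stable b n k F C H \<longleftrightarrow> (\<forall>g e d. 0 \<le> e \<longrightarrow> 0 \<le> d \<longrightarrow> (\<forall>l\<in>F. \<bar>g l\<bar> \<le> e) \<longrightarrow>
     (\<forall>j<Suc n - k. \<bar>\<Sum>r<k. b r * g (j + r)\<bar> \<le> d) \<longrightarrow> (\<forall>l<n. \<bar>g l\<bar> \<le> C * (e + d / H)))"

lemma toeplitz_stableI:
  assumes "\<And>g e d l. 0 \<le> e \<Longrightarrow> 0 \<le> d \<Longrightarrow> \<forall>l\<in>F. \<bar>g l\<bar> \<le> e \<Longrightarrow>
      \<forall>j<Suc n - k. \<bar>\<Sum>r<k. b r * g (j + r)\<bar> \<le> d \<Longrightarrow> l < n \<Longrightarrow> \<bar>g l\<bar> \<le> C * (e + d / H)"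
  shows "toeplitz_stable b n k F C H"
  using assms unfolding toeplitz_stable_def by blast

lemma toeplitz_stableD:
  assumes "toeplitz_stable b n k F C H" "0 \<le> e" "0 \<le> d" "\<forall>l\<in>F. \<bar>g l\<bar> \<le> e"
    "\<forall>j<Suc n - k. \<bar>\<Sum>r<k. b r * g (j + r)\<bar> \<le> d" "l < n"
  shows "\<bar>g l\<bar> \<le> C * (e + d / H)"
  using assms unfolding toeplitz_stable_def by blast

lemma toeplitz_stable_mono:
  assumes "toeplitz_stable b n k F C H" "C \<le> C'" "0 < H"
  shows "toeplitz_stable b n k F C' H"
proof (rule toeplitz_stableI)
  fix g e d l
  assume "0 \<le> e" "0 \<le> d" "\<forall>l\<in>F. \<bar>g l\<bar> \<le> e" "\<forall>j<Suc n - k. \<bar>\<Sum>r<k. b r * g (j + r)\<bar> \<le> d" "l < n"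
  then have "\<bar>g l\<bar> \<le> C * (e + d / H)" by (rule toeplitz_stableD[OF assms(1)])
  also have "\<dots> \<le> C' * (e + d / H)" using assms(2,3) \<open>0 \<le> e\<close> \<open>0 \<le> d\<close> by (intro mult_right_mono) auto
  finally show "\<bar>g l\<bar> \<le> C' * (e + d / H)" .
qed

lemma toeplitz_stable_rescale:
  assumes "toeplitz_stable b n k F C B" "0 \<le> C" "0 < H" "0 < B" "H \<le> Z * B" "1 \<le> Z"
  shows "toeplitz_stable b n k F (C * Z) H"
proof (rule toeplitz_stableI)
  fix g e d l
  assume e0: "0 \<le> e" and d0: "0 \<le> d" and "\<forall>l\<in>F. \<bar>g l\<bar> \<le> e"
    "\<forall>j<Suc n - k. \<bar>\<Sum>r<k. b r * g (j + r)\<bar> \<le> d" "l < n"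
  then have "\<bar>g l\<bar> \<le> C * (e + d / B)" by (rule toeplitz_stableD[OF assms(1)])
  also have "\<dots> \<le> C * (Z * (e + d / H))"
  proof (intro mult_left_mono)
    have "d * H \<le> d * (Z * B)" using assms(5) d0 by (intro mult_left_mono)
    then have "d / B \<le> Z * (d / H)" using assms(3,4) by (simp add: field_simps)
    moreover have "e \<le> Z * e" using assms(6) e0 by (simp add: mult_le_cancel_right1)
    ultimately show "e + d / B \<le> Z * (e + d / H)" by (simp add: algebra_simps)
  qed (rule assms(2))
  finally show "\<bar>g l\<bar> \<le> C * Z * (e + d / H)" by (simp add: mult_ac)
qed

lemma abs_le_forward_substitution:
  assumes k1: "1 \<le> k" and H0: "0 < H" and top: "H \<le> \<bar>b (k - 1)\<bar>" and bounded: "\<forall>r<k. \<bar>b r\<bar> \<le> B * H"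
    and B0: "0 \<le> B" and eq: "\<bar>\<Sum>s<k. b s * g (j + s)\<bar> \<le> d" and prev: "\<And>s. s < k - 1 \<Longrightarrow> \<bar>g (j + s)\<bar> \<le> c"
  shows "\<bar>g (j + (k - 1))\<bar> \<le> d / H + real (k - 1) * B * c"
proof -
  have "{..<k} = insert (k - 1) {..<k - 1}" using k1 by auto
  then have split: "(\<Sum>s<k. b s * g (j + s)) = b (k - 1) * g (j + (k - 1)) + (\<Sum>s<k - 1. b s * g (j + s))"
    by simp
  have "\<bar>b s * g (j + s)\<bar> \<le> B * H * c" if "s < k - 1" for s
    using that bounded prev[OF that] B0 H0 by (simp add: abs_mult mult_mono)
  then have "(\<Sum>s<k - 1. \<bar>b s * g (j + s)\<bar>) \<le> (\<Sum>s<k - 1. B * H * c)"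
    by (intro sum_mono) simp
  then have "\<bar>\<Sum>s<k - 1. b s * g (j + s)\<bar> \<le> real (k - 1) * (B * H * c)"
    by (simp add: order_trans[OF sum_abs])
  then have "\<bar>b (k - 1) * g (j + (k - 1))\<bar> \<le> d + real (k - 1) * (B * H * c)"
    using eq split by linarith
  moreover have "H * \<bar>g (j + (k - 1))\<bar> \<le> \<bar>b (k - 1) * g (j + (k - 1))\<bar>"
    using top by (simp add: abs_mult mult_right_mono)
  ultimately show ?thesis using H0 by (simp add: field_simps)
qed

text \<open>With a dominant last coefficient, the equations determine \<open>g\<close> recursively from its first
  \<open>k - 1\<close> entries.\<close>
lemma toeplitz_stable_dominant_last:
  assumes k1: "1 \<le> k" and H0: "0 < H" and top: "H \<le> \<bar>b (k - 1)\<bar>"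
    and bounded: "\<forall>r<k. \<bar>b r\<bar> \<le> B * H"
  shows "toeplitz_stable b n k {..<k - 1} ((1 + real k * B) ^ n) H"
proof (rule toeplitz_stableI)
  fix g e d l
  assume e0: "0 \<le> e" and d0: "0 \<le> d" and initial: "\<forall>l\<in>{..<k - 1}. \<bar>g l\<bar> \<le> e"
    and eqs: "\<forall>j<Suc n - k. \<bar>\<Sum>r<k. b r * g (j + r)\<bar> \<le> d" and "l < n"
  define D where "D = 1 + real k * B"
  define E where "E = e + d / H"
  have "0 \<le> B * H" using bounded k1 abs_ge_zero[of "b 0"] by (meson less_le_trans order.trans zero_less_one)
  then have B0: "0 \<le> B" using H0 by (simp add: zero_le_mult_iff)
  have D1: "1 \<le> D" unfolding D_def using B0 by simp
  have E0: "0 \<le> E" unfolding E_def using e0 d0 H0 by simp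
  have grow: "E \<le> D ^ m * E" for m using D1 E0 by (simp add: mult_le_cancel_right1 one_le_power)
  have "\<bar>g l\<bar> \<le> D ^ Suc l * E" if "l < n" for l
    using that
  proof (induction l rule: less_induct)
    case (less l)
    show ?case
    proof (cases "l < k - 1")
      case True
      then have "\<bar>g l\<bar> \<le> e" using initial by auto
      also have "e \<le> E" unfolding E_def using d0 H0 by simp
      finally show ?thesis using grow[of "Suc l"] by linarith
    next
      case False
      define j where "j = l - (k - 1)"
      have jl: "j + (k - 1) = l" unfolding j_def using False by simp
      have "\<bar>g (j + s)\<bar> \<le> D ^ l * E" if "s < k - 1" for s
      proof -
        have "j + s < l" using that jl by linarith
        then have "\<bar>g (j + s)\<bar> \<le> D ^ Suc (j + s) * E" using less.IH less.prems by simp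
        also have "\<dots> \<le> D ^ l * E"
          using D1 E0 \<open>j + s < l\<close> by (intro mult_right_mono power_increasing) auto
        finally show ?thesis .
      qed
      moreover have "j < Suc n - k" unfolding j_def using False less.prems k1 by linarith
      ultimately have "\<bar>g l\<bar> \<le> d / H + real (k - 1) * B * (D ^ l * E)"
        using abs_le_forward_substitution[OF k1 H0 top bounded B0, of g j d] eqs jl by auto
      also have "\<dots> \<le> D ^ l * E + real k * B * (D ^ l * E)"
      proof -
        have "d / H \<le> E" unfolding E_def using e0 by simp
        moreover have "real (k - 1) * B * (D ^ l * E) \<le> real k * B * (D ^ l * E)"
          using B0 D1 E0 by (intro mult_right_mono) auto
        ultimately show ?thesis using grow[of l] by linarith
      qed
      also have "\<dots> = D ^ Suc l * E" unfolding D_def by (simp add: algebra_simps)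
      finally show ?thesis .
    qed
  qed
  then have "\<bar>g l\<bar> \<le> D ^ Suc l * E" using \<open>l < n\<close> .
  also have "\<dots> \<le> D ^ n * E" using D1 E0 \<open>l < n\<close> by (intro mult_right_mono power_increasing) auto
  finally show "\<bar>g l\<bar> \<le> (1 + real k * B) ^ n * (e + d / H)" unfolding D_def E_def .
qed

lemma abs_le_of_dominant_coeff:
  fixes x y \<alpha> \<beta> d :: real
  assumes "\<bar>\<beta> * x + \<alpha> * y\<bar> \<le> d" "\<bar>\<alpha>\<bar> \<le> \<bar>\<beta>\<bar>" "0 < \<bar>\<beta>\<bar>"
  shows "\<bar>x\<bar> \<le> \<bar>y\<bar> + d / \<bar>\<beta>\<bar>"
proof -
  have "\<bar>\<beta>\<bar> * \<bar>x\<bar> \<le> d + \<bar>\<alpha>\<bar> * \<bar>y\<bar>"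
    using assms(1) abs_triangle_ineq4[of "\<beta> * x + \<alpha> * y" "\<alpha> * y"] by (simp add: abs_mult)
  also have "\<dots> \<le> d + \<bar>\<beta>\<bar> * \<bar>y\<bar>" using assms(2) by (simp add: mult_right_mono)
  finally show ?thesis using assms(3) by (simp add: field_simps)
qed

lemma abs_le_increments:
  fixes h :: "nat \<Rightarrow> real"
  assumes "\<And>i. i < m \<Longrightarrow> \<bar>h (Suc i)\<bar> \<le> \<bar>h i\<bar> + c"
  shows "i \<le> m \<Longrightarrow> \<bar>h i\<bar> \<le> \<bar>h 0\<bar> + real i * c"
proof (induction i)
  case (Suc i)
  then have "\<bar>h (Suc i)\<bar> \<le> \<bar>h i\<bar> + c" "\<bar>h i\<bar> \<le> \<bar>h 0\<bar> + real i * c" using assms by auto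
  then show ?case by (simp add: algebra_simps)
qed simp

lemma sum_lessThan_2: "(\<Sum>r<(2::nat). f r) = f 0 + f 1"
  by (simp add: numeral_2_eq_2)

lemma toeplitz_stable_two_forward:
  assumes "\<bar>b 0\<bar> \<le> \<bar>b 1\<bar>" "0 < \<bar>b 1\<bar>"
  shows "toeplitz_stable b n 2 {0} (real n) \<bar>b 1\<bar>"
proof (rule toeplitz_stableI)
  fix g e d l
  assume e0: "0 \<le> e" and d0: "0 \<le> d" and fixed: "\<forall>l\<in>{0}. \<bar>g l\<bar> \<le> e"
    and eqs: "\<forall>j<Suc n - 2. \<bar>\<Sum>r<2. b r * g (j + r)\<bar> \<le> d" and "l < n"
  have incr: "\<bar>g (Suc i)\<bar> \<le> \<bar>g i\<bar> + d / \<bar>b 1\<bar>" if "i < n - 1" for i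
  proof (rule abs_le_of_dominant_coeff[OF _ assms])
    show "\<bar>b 1 * g (Suc i) + b 0 * g i\<bar> \<le> d"
      using that eqs by (simp add: sum_lessThan_2 add.commute)
  qed
  have "\<bar>g l\<bar> \<le> \<bar>g 0\<bar> + real l * (d / \<bar>b 1\<bar>)"
    using abs_le_increments[of "n - 1" g "d / \<bar>b 1\<bar>" l, OF incr] \<open>l < n\<close> by simp
  also have "\<dots> \<le> e + real l * (d / \<bar>b 1\<bar>)" using fixed by simp
  also have "\<dots> \<le> real n * (e + d / \<bar>b 1\<bar>)"
  proof -
    have "real l * (d / \<bar>b 1\<bar>) \<le> real n * (d / \<bar>b 1\<bar>)" using \<open>l < n\<close> d0 by (intro mult_right_mono) auto
    moreover have "1 * e \<le> real n * e" using \<open>l < n\<close> e0 by (intro mult_right_mono) auto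
    ultimately show ?thesis by (simp add: algebra_simps)
  qed
  finally show "\<bar>g l\<bar> \<le> real n * (e + d / \<bar>b 1\<bar>)" .
qed

lemma toeplitz_stable_two_backward:
  assumes "\<bar>b 1\<bar> \<le> \<bar>b 0\<bar>" "0 < \<bar>b 0\<bar>"
  shows "toeplitz_stable b n 2 {n - 1} (real n) \<bar>b 0\<bar>"
proof (rule toeplitz_stableI)
  fix g e d l
  assume e0: "0 \<le> e" and d0: "0 \<le> d" and fixed: "\<forall>l\<in>{n - 1}. \<bar>g l\<bar> \<le> e"
    and eqs: "\<forall>j<Suc n - 2. \<bar>\<Sum>r<2. b r * g (j + r)\<bar> \<le> d" and "l < n"
  define h where "h i = g (n - 1 - i)" for i
  have incr: "\<bar>h (Suc i)\<bar> \<le> \<bar>h i\<bar> + d / \<bar>b 0\<bar>" if "i < n - 1" for i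
  proof -
    have "Suc (n - 1 - Suc i) = n - 1 - i" using that by simp
    moreover have "\<bar>b 0 * g (n - 1 - Suc i) + b 1 * g (Suc (n - 1 - Suc i))\<bar> \<le> d"
      using that eqs by (simp add: sum_lessThan_2)
    ultimately show ?thesis unfolding h_def using abs_le_of_dominant_coeff[OF _ assms] by simp
  qed
  have "\<bar>h (n - 1 - l)\<bar> \<le> \<bar>h 0\<bar> + real (n - 1 - l) * (d / \<bar>b 0\<bar>)"
    using abs_le_increments[of "n - 1" h "d / \<bar>b 0\<bar>" "n - 1 - l", OF incr] by simp
  then have "\<bar>g l\<bar> \<le> e + real (n - 1 - l) * (d / \<bar>b 0\<bar>)"
    using \<open>l < n\<close> fixed by (simp add: h_def)
  also have "\<dots> \<le> real n * (e + d / \<bar>b 0\<bar>)"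
  proof -
    have "real (n - 1 - l) * (d / \<bar>b 0\<bar>) \<le> real n * (d / \<bar>b 0\<bar>)" using d0 by (intro mult_right_mono) auto
    moreover have "1 * e \<le> real n * e" using \<open>l < n\<close> e0 by (intro mult_right_mono) auto
    ultimately show ?thesis by (simp add: algebra_simps)
  qed
  finally show "\<bar>g l\<bar> \<le> real n * (e + d / \<bar>b 0\<bar>)" .
qed

lemma toeplitz_stable_two:
  assumes H0: "0 < H" and Z1: "1 \<le> Z" and HB: "H \<le> Z * max \<bar>b 0\<bar> \<bar>b 1\<bar>"
  shows "\<exists>F. finite F \<and> card F = 1 \<and> toeplitz_stable b n 2 F (real n * Z) H"
proof -
  define B where "B = max \<bar>b 0\<bar> \<bar>b 1\<bar>"
  have "0 < Z * B" using H0 HB unfolding B_def by linarith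
  then have B0: "0 < B" using Z1 by (simp add: zero_less_mult_iff)
  have rescale: "toeplitz_stable b n 2 F (real n * Z) H" if "toeplitz_stable b n 2 F (real n) B" for F
    using toeplitz_stable_rescale[OF that _ H0 B0 HB[folded B_def] Z1] by simp
  show ?thesis
  proof (cases "\<bar>b 0\<bar> \<le> \<bar>b 1\<bar>")
    case True
    then have "toeplitz_stable b n 2 {0} (real n) B"
      using toeplitz_stable_two_forward B0 unfolding B_def by (simp add: max_def)
    then show ?thesis using rescale by (intro exI[of _ "{0}"]) auto
  next
    case False
    then have "toeplitz_stable b n 2 {n - 1} (real n) B"
      using toeplitz_stable_two_backward B0 unfolding B_def by (simp add: max_def)
    then show ?thesis using rescale by (intro exI[of _ "{n - 1}"]) auto
  qed
qed

lemma exists_empty_band: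
  fixes v :: "nat \<Rightarrow> real"
  assumes B0: "0 < B"
  shows "\<exists>s\<le>k. \<forall>r<k. \<not> (B / 3 ^ Suc s \<le> v r \<and> v r < B / 3 ^ s)"
proof (rule ccontr)
  assume "\<not> ?thesis"
  then obtain ch where ch: "\<forall>s\<in>{..k}. ch s < k \<and> B / 3 ^ Suc s \<le> v (ch s) \<and> v (ch s) < B / 3 ^ s"
    by (metis atMost_iff bchoice)
  have band_unique: "s = t"
    if "B / 3 ^ Suc s \<le> x" "x < B / 3 ^ s" "B / 3 ^ Suc t \<le> x" "x < B / 3 ^ t" for s t :: nat and x :: real
  proof (rule ccontr)
    assume "s \<noteq> t"
    then consider "Suc s \<le> t" | "Suc t \<le> s" by linarith
    then show False
    proof cases
      case 1
      then have "B / 3 ^ t \<le> B / 3 ^ Suc s" using B0 by (intro divide_left_mono power_increasing) auto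
      then show False using that by linarith
    next
      case 2
      then have "B / 3 ^ s \<le> B / 3 ^ Suc t" using B0 by (intro divide_left_mono power_increasing) auto
      then show False using that by linarith
    qed
  qed
  have "inj_on ch {..k}"
    by (rule inj_onI) (use ch band_unique in metis)
  moreover have "ch ` {..k} \<subseteq> {..<k}" using ch by auto
  ultimately have "card {..k} \<le> card {..<k}" by (intro card_inj_on_le) auto
  then show False by simp
qed

text \<open>\<open>T\<close> is taken at an empty band, and \<open>p\<close>, \<open>q\<close> are the first and last indices with
  \<open>T \<le> \<bar>b r\<bar>\<close>.\<close>
lemma exists_dominant_pair:
  fixes b :: "nat \<Rightarrow> real"
  assumes Bmax: "\<forall>r<k. \<bar>b r\<bar> \<le> B" and r0: "r0 < k" "\<bar>b r0\<bar> = B" and B0: "0 < B"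
    and zero: "\<forall>r\<ge>k. b r = 0"
  shows "\<exists>T p q. 0 < T \<and> T \<le> B \<and> B \<le> 3 ^ k * T \<and> p \<le> q \<and> q < k \<and> T \<le> \<bar>b p\<bar> \<and> T \<le> \<bar>b q\<bar>
    \<and> \<bar>b (Suc q)\<bar> < T / 3 \<and> (p = 0 \<or> \<bar>b (p - 1)\<bar> < T / 3)"
proof -
  obtain s where s: "s \<le> k" "\<forall>r<k. \<not> (B / 3 ^ Suc s \<le> \<bar>b r\<bar> \<and> \<bar>b r\<bar> < B / 3 ^ s)"
    using exists_empty_band[OF B0, of k "\<lambda>r. \<bar>b r\<bar>"] by blast
  define T where "T = B / 3 ^ s"
  have T0: "0 < T" unfolding T_def using B0 by simp
  have TB: "T \<le> B" unfolding T_def using B0 by (simp add: divide_le_eq mult_le_cancel_left1)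
  have BT: "B \<le> 3 ^ k * T"
  proof -
    have "(3::real) ^ s \<le> 3 ^ k" using s(1) by (intro power_increasing) auto
    then show ?thesis unfolding T_def using B0 by (simp add: field_simps mult_right_mono)
  qed
  have gap: "T \<le> \<bar>b r\<bar> \<or> \<bar>b r\<bar> < T / 3" for r
    using s(2) zero T0 unfolding T_def by (cases "r < k") (auto simp: not_less)
  define A where "A = {r. r < k \<and> T \<le> \<bar>b r\<bar>}"
  have fA: "finite A" unfolding A_def by simp
  have "r0 \<in> A" unfolding A_def using r0 TB by simp
  then have neA: "A \<noteq> {}" by blast
  define p where "p = Min A"
  define q where "q = Max A"
  have "p \<in> A" "q \<in> A" unfolding p_def q_def using fA neA by simp_all
  then have pq: "p \<le> q" "q < k" "T \<le> \<bar>b p\<bar>" "T \<le> \<bar>b q\<bar>"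
    using fA unfolding p_def q_def A_def by auto
  have "Suc q \<notin> A" using fA unfolding q_def by (metis Max_ge Suc_n_not_le_n)
  then have "\<bar>b (Suc q)\<bar> < T / 3" using gap[of "Suc q"] zero[rule_format, of "Suc q"] T0
    unfolding A_def by (cases "Suc q < k") auto
  moreover have "p = 0 \<or> \<bar>b (p - 1)\<bar> < T / 3"
  proof (cases "p = 0")
    case False
    then have "p - 1 \<notin> A" using fA unfolding p_def by (metis Min_le diff_less less_le_not_le zero_less_one neq0_conv)
    then show ?thesis using gap[of "p - 1"] pq unfolding A_def by force
  qed simp
  ultimately show ?thesis using T0 TB BT pq by blast
qed

lemma cramer_abs_le:
  fixes \<alpha> \<beta> \<gamma> \<delta> x y s t :: real
  assumes "\<alpha> * x + \<beta> * y = s" "\<gamma> * x + \<delta> * y = t"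
  shows "\<bar>\<alpha> * \<delta> - \<beta> * \<gamma>\<bar> * \<bar>x\<bar> \<le> \<bar>\<delta>\<bar> * \<bar>s\<bar> + \<bar>\<beta>\<bar> * \<bar>t\<bar>"
    and "\<bar>\<alpha> * \<delta> - \<beta> * \<gamma>\<bar> * \<bar>y\<bar> \<le> \<bar>\<alpha>\<bar> * \<bar>t\<bar> + \<bar>\<gamma>\<bar> * \<bar>s\<bar>"
proof -
  have "(\<alpha> * \<delta> - \<beta> * \<gamma>) * x = \<delta> * s - \<beta> * t" "(\<alpha> * \<delta> - \<beta> * \<gamma>) * y = \<alpha> * t - \<gamma> * s"
    using assms by (auto simp: algebra_simps)
  then show "\<bar>\<alpha> * \<delta> - \<beta> * \<gamma>\<bar> * \<bar>x\<bar> \<le> \<bar>\<delta>\<bar> * \<bar>s\<bar> + \<bar>\<beta>\<bar> * \<bar>t\<bar>"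
    and "\<bar>\<alpha> * \<delta> - \<beta> * \<gamma>\<bar> * \<bar>y\<bar> \<le> \<bar>\<alpha>\<bar> * \<bar>t\<bar> + \<bar>\<gamma>\<bar> * \<bar>s\<bar>"
    by (metis abs_mult abs_triangle_ineq4)+
qed

lemma abs_le_of_det_lower_bound:
  fixes \<Delta> x T B S :: real
  assumes \<Delta>: "8 / 9 * (T * T) \<le> \<bar>\<Delta>\<bar>" and x: "\<bar>\<Delta>\<bar> * \<bar>x\<bar> \<le> 2 * B * S" and BT: "B \<le> 3 ^ k * T" and B0: "0 < B"
  shows "\<bar>x\<bar> \<le> 9 ^ Suc k / 4 * (S / B)"
proof -
  have "B * B \<le> (3 ^ k * T) * (3 ^ k * T)" using BT B0 by (intro mult_mono) auto
  also have "\<dots> = 9 ^ k * (T * T)" by (simp add: power_mult_distrib[symmetric] mult_ac)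
  finally have "8 / 9 * (B * B) * \<bar>x\<bar> \<le> 8 / 9 * (9 ^ k * (T * T)) * \<bar>x\<bar>"
    by (intro mult_right_mono) auto
  also have "\<dots> = 9 ^ k * (8 / 9 * (T * T) * \<bar>x\<bar>)" by simp
  also have "\<dots> \<le> 9 ^ k * (\<bar>\<Delta>\<bar> * \<bar>x\<bar>)" using \<Delta> by (intro mult_left_mono mult_right_mono) auto
  also have "\<dots> \<le> 9 ^ k * (2 * B * S)" using x by simp
  finally show ?thesis using B0 by (simp add: field_simps)
qed

text \<open>For \<open>n = k + 1\<close> there are two equations. Leaving free the two coordinates \<open>p\<close> and
  \<open>Suc q\<close> of a dominant pair, Cramer's rule applies with a determinant of size at least
  \<open>8 / 9 * T\<^sup>2\<close>.\<close>
lemma toeplitz_stable_square: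
  assumes Bmax: "\<forall>r<k. \<bar>b r\<bar> \<le> B" and r0: "r0 < k" "\<bar>b r0\<bar> = B" and B0: "0 < B"
  shows "\<exists>F. finite F \<and> card F = k - 1 \<and> toeplitz_stable b (Suc k) k F (9 ^ Suc k * (1 + real k)) B"
proof -
  define c where "c r = (if r < k then b r else 0)" for r
  define c' where "c' r = (if r = 0 then 0 else c (r - 1))" for r
  have cB: "\<bar>c r\<bar> \<le> B" "\<bar>c' r\<bar> \<le> B" for r using Bmax B0 by (auto simp: c_def c'_def)
  have "\<forall>r<k. \<bar>c r\<bar> \<le> B" "\<bar>c r0\<bar> = B" "\<forall>r\<ge>k. c r = 0" using Bmax r0 by (auto simp: c_def)
  then obtain T p q where T: "0 < T" "B \<le> 3 ^ k * T"
    and pq: "p \<le> q" "q < k" "T \<le> \<bar>c p\<bar>" "T \<le> \<bar>c q\<bar>" "\<bar>c (Suc q)\<bar> < T / 3"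
    and pred: "p = 0 \<or> \<bar>c (p - 1)\<bar> < T / 3"
    using exists_dominant_pair[of k c B r0] r0(1) B0 by blast
  have c'p: "\<bar>c' p\<bar> < T / 3" using pred T(1) by (auto simp: c'_def)
  define \<Delta> where "\<Delta> = c p * c q - c (Suc q) * c' p"
  have \<Delta>: "8 / 9 * (T * T) \<le> \<bar>\<Delta>\<bar>"
  proof -
    have "T * T \<le> \<bar>c p\<bar> * \<bar>c q\<bar>" using pq T by (intro mult_mono) auto
    moreover have "\<bar>c (Suc q)\<bar> * \<bar>c' p\<bar> \<le> (T / 3) * (T / 3)" using pq c'p by (intro mult_mono) auto
    ultimately show ?thesis unfolding \<Delta>_def using abs_triangle_ineq2[of "c p * c q" "c (Suc q) * c' p"]
      by (simp add: abs_mult)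
  qed
  define F where "F = {..k} - {p, Suc q}"
  have "card F = k - 1" unfolding F_def using pq by (subst card_Diff_subset) auto
  moreover have "finite F" unfolding F_def by auto
  moreover have "toeplitz_stable b (Suc k) k F (9 ^ Suc k * (1 + real k)) B"
  proof (rule toeplitz_stableI)
    fix g e d l
    assume e0: "0 \<le> e" and d0: "0 \<le> d" and small: "\<forall>l\<in>F. \<bar>g l\<bar> \<le> e"
      and eqs: "\<forall>j<Suc (Suc k) - k. \<bar>\<Sum>r<k. b r * g (j + r)\<bar> \<le> d" and "l < Suc k"
    define S where "S = d + real k * B * e"
    have reduced: "\<bar>w p * g p + w (Suc q) * g (Suc q)\<bar> \<le> S"
      if "\<bar>\<Sum>l\<le>k. w l * g l\<bar> \<le> d" "\<And>l. \<bar>w l\<bar> \<le> B" for w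
    proof -
      have "{..k} = insert p (insert (Suc q) F)" "p \<notin> insert (Suc q) F" "Suc q \<notin> F"
        unfolding F_def using pq by auto
      then have split: "(\<Sum>l\<le>k. w l * g l) = w p * g p + w (Suc q) * g (Suc q) + (\<Sum>l\<in>F. w l * g l)"
        using \<open>finite F\<close> by (simp add: algebra_simps)
      have "(\<Sum>l\<in>F. \<bar>w l * g l\<bar>) \<le> (\<Sum>l\<in>F. B * e)"
        using that(2) small B0 by (intro sum_mono) (auto simp: abs_mult intro!: mult_mono)
      also have "\<dots> \<le> real k * B * e" using \<open>card F = k - 1\<close> B0 e0 by (simp add: mult_right_mono)
      finally have "\<bar>\<Sum>l\<in>F. w l * g l\<bar> \<le> real k * B * e" by (rule order_trans[OF sum_abs])
      then show ?thesis using that(1) split unfolding S_def by linarith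
    qed
    have "(\<Sum>l\<le>k. c l * g l) = (\<Sum>r<k. b r * g (0 + r))"
      by (simp add: c_def lessThan_Suc_atMost[symmetric])
    then have s0: "\<bar>c p * g p + c (Suc q) * g (Suc q)\<bar> \<le> S"
      using eqs[rule_format, of 0] cB by (intro reduced) auto
    have "(\<Sum>l\<le>k. c' l * g l) = (\<Sum>r<k. b r * g (1 + r))"
      unfolding lessThan_Suc_atMost[symmetric] sum.lessThan_Suc_shift by (simp add: c'_def c_def)
    then have s1: "\<bar>c' p * g p + c q * g (Suc q)\<bar> \<le> S"
      using eqs[rule_format, of 1] cB reduced[of c'] by (simp add: c'_def)
    have "\<bar>\<Delta>\<bar> * \<bar>g p\<bar> \<le> \<bar>c q\<bar> * \<bar>c p * g p + c (Suc q) * g (Suc q)\<bar> + \<bar>c (Suc q)\<bar> * \<bar>c' p * g p + c q * g (Suc q)\<bar>"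
      "\<bar>\<Delta>\<bar> * \<bar>g (Suc q)\<bar> \<le> \<bar>c p\<bar> * \<bar>c' p * g p + c q * g (Suc q)\<bar> + \<bar>c' p\<bar> * \<bar>c p * g p + c (Suc q) * g (Suc q)\<bar>"
      unfolding \<Delta>_def by (rule cramer_abs_le[OF refl refl])+
    moreover have "\<bar>w\<bar> * \<bar>s\<bar> + \<bar>w'\<bar> * \<bar>s'\<bar> \<le> 2 * B * S"
      if "\<bar>w\<bar> \<le> B" "\<bar>w'\<bar> \<le> B" "\<bar>s\<bar> \<le> S" "\<bar>s'\<bar> \<le> S" for w w' s s' :: real
      using that B0 mult_mono[of "\<bar>w\<bar>" B "\<bar>s\<bar>" S] mult_mono[of "\<bar>w'\<bar>" B "\<bar>s'\<bar>" S] by simp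
    ultimately have "\<bar>\<Delta>\<bar> * \<bar>g p\<bar> \<le> 2 * B * S" "\<bar>\<Delta>\<bar> * \<bar>g (Suc q)\<bar> \<le> 2 * B * S"
      using s0 s1 cB by (meson order_trans)+
    then have "\<bar>g p\<bar> \<le> 9 ^ Suc k / 4 * (S / B)" "\<bar>g (Suc q)\<bar> \<le> 9 ^ Suc k / 4 * (S / B)"
      using abs_le_of_det_lower_bound[OF \<Delta> _ T(2) B0] by blast+
    moreover have "9 ^ Suc k / 4 * (S / B) \<le> 9 ^ Suc k * (1 + real k) * (e + d / B)"
    proof -
      have SB: "S / B \<le> (1 + real k) * (e + d / B)"
        unfolding S_def using B0 e0 d0 mult_nonneg_nonneg[of "real k" "d / B"]
        by (simp add: add_divide_distrib algebra_simps)
      have "0 \<le> S / B" unfolding S_def using B0 e0 d0 by simp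
      then have "9 ^ Suc k / 4 * (S / B) \<le> 9 ^ Suc k * (S / B)"
        by (intro mult_right_mono) auto
      also have "\<dots> \<le> 9 ^ Suc k * ((1 + real k) * (e + d / B))"
        using SB by (intro mult_left_mono) auto
      finally show ?thesis by (simp add: mult_ac)
    qed
    moreover have "e \<le> 9 ^ Suc k * (1 + real k) * (e + d / B)"
    proof -
      have "1 * 1 \<le> (9::real) ^ Suc k * (1 + real k)" by (intro mult_mono one_le_power) auto
      then have "1 * e \<le> 9 ^ Suc k * (1 + real k) * e" using e0 by (intro mult_right_mono) auto
      also have "\<dots> \<le> 9 ^ Suc k * (1 + real k) * (e + d / B)" using d0 B0 by (intro mult_left_mono) auto
      finally show ?thesis by simp
    qed
    moreover have "l \<in> F \<or> l = p \<or> l = Suc q" unfolding F_def using \<open>l < Suc k\<close> by auto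
    ultimately show "\<bar>g l\<bar> \<le> 9 ^ Suc k * (1 + real k) * (e + d / B)" using small by fastforce
  qed
  ultimately show ?thesis by blast
qed

lemma toeplitz_stable_quot_coeff_lead:
  assumes k1: "1 \<le> k" and lead: "\<forall>j\<le>k. \<bar>a j\<bar> \<le> \<bar>a k\<bar>" and ak: "a k \<noteq> 0"
  shows "toeplitz_stable (quot_coeff a \<xi> k) n k {..<k - 1}
    ((1 + real k * ((real k + 1) * (max 1 \<bar>\<xi>\<bar>) ^ k)) ^ n) \<bar>real_of_int (a k)\<bar>"
proof (rule toeplitz_stable_dominant_last[OF k1])
  have "\<forall>j\<le>k. \<bar>real_of_int (a j)\<bar> \<le> \<bar>real_of_int (a k)\<bar>" using lead by (metis of_int_abs of_int_le_iff)
  then show "\<forall>r<k. \<bar>quot_coeff a \<xi> k r\<bar> \<le> (real k + 1) * (max 1 \<bar>\<xi>\<bar>) ^ k * \<bar>real_of_int (a k)\<bar>"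
    using abs_quot_coeff_le by blast
qed (use ak quot_coeff_top[OF k1] in auto)

lemma exists_toeplitz_stable_quot_coeff:
  fixes \<xi> :: real
  defines "Z \<equiv> 2 * (1 + \<bar>\<xi>\<bar>)"
  assumes k2: "2 \<le> k" and kn: "k \<le> n" and cases: "k = 2 \<or> n = k + 1" and i: "i \<le> k"
    and H0: "0 < \<bar>real_of_int (a i)\<bar>" and small: "\<bar>poly_val a \<xi> k\<bar> \<le> \<bar>real_of_int (a i)\<bar> / 2"
  shows "\<exists>F. finite F \<and> card F = k - 1 \<and>
    toeplitz_stable (quot_coeff a \<xi> k) n k F (real n * Z + 9 ^ Suc k * (1 + real k) * Z) \<bar>real_of_int (a i)\<bar>"
proof -
  define b where "b = quot_coeff a \<xi> k"
  define B where "B = Max ((\<lambda>r. \<bar>b r\<bar>) ` {..<k})"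
  have fin: "finite ((\<lambda>r. \<bar>b r\<bar>) ` {..<k})" "(\<lambda>r. \<bar>b r\<bar>) ` {..<k} \<noteq> {}"
    using k2 by (auto simp: lessThan_empty_iff)
  have Bmax: "\<forall>r<k. \<bar>b r\<bar> \<le> B" unfolding B_def using fin(1) by simp
  obtain r0 where r0: "r0 < k" "\<bar>b r0\<bar> = B"
    using Max_in[OF fin] unfolding B_def image_iff lessThan_iff by (elim bexE) simp
  have HB: "\<bar>real_of_int (a i)\<bar> \<le> Z * B"
    using coeff_le_quot_coeff[OF i _ small] Bmax k2 unfolding Z_def b_def by simp
  have Z1: "1 \<le> Z" unfolding Z_def by simp
  have "0 < Z * B" using H0 HB by linarith
  then have B0: "0 < B" using Z1 by (simp add: zero_less_mult_iff)
  have C: "real n * Z \<le> real n * Z + 9 ^ Suc k * (1 + real k) * Z"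
    "9 ^ Suc k * (1 + real k) * Z \<le> real n * Z + 9 ^ Suc k * (1 + real k) * Z" using Z1 by simp_all
  show ?thesis
  proof (cases "k = 2")
    case True
    have "{..<k} = {0, 1}" using True by auto
    then have "B = max \<bar>b 0\<bar> \<bar>b 1\<bar>" unfolding B_def by (simp add: max.commute)
    then obtain F where "finite F" "card F = 1" "toeplitz_stable b n 2 F (real n * Z) \<bar>real_of_int (a i)\<bar>"
      using toeplitz_stable_two[OF H0 Z1] HB by blast
    then show ?thesis
      using True toeplitz_stable_mono[OF _ C(1) H0] unfolding b_def by (intro exI[of _ F]) simp
  next
    case False
    then have "n = Suc k" using cases by simp
    obtain F where "finite F" "card F = k - 1" "toeplitz_stable b (Suc k) k F (9 ^ Suc k * (1 + real k)) B"
      using toeplitz_stable_square[OF Bmax r0 B0] by blast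
    then show ?thesis
      using \<open>n = Suc k\<close> toeplitz_stable_rescale[OF _ _ H0 B0 HB Z1] toeplitz_stable_mono[OF _ C(2) H0]
      unfolding b_def by (intro exI[of _ F]) simp
  qed
qed

section \<open>Dirichlet's box principle\<close>

lemma pigeonhole_int_interval:
  assumes "f ` {0..int M} \<subseteq> T" "finite T" "card T < M + 1"
  shows "\<exists>t1 t2. 0 \<le> t1 \<and> t1 < t2 \<and> t2 \<le> int M \<and> f t1 = f t2"
proof -
  have "card (f ` {0..int M}) < card {0..int M}"
    using card_mono[OF assms(2,1)] assms(3) by simp
  then have "\<not> inj_on f {0..int M}" by (rule pigeonhole)
  then obtain t1 t2 where "t1 \<in> {0..int M}" "t2 \<in> {0..int M}" "t1 \<noteq> t2" "f t1 = f t2"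
    unfolding inj_on_def by blast
  then show ?thesis by (metis atLeastAtMost_iff linorder_neqE)
qed

lemma floor_divide_mem_box:
  fixes x e B :: real
  assumes "0 < e" "\<bar>x\<bar> \<le> B"
  shows "\<lfloor>x / e\<rfloor> \<in> {- \<lceil>B / e\<rceil> .. \<lceil>B / e\<rceil>}"
proof -
  have "- (B / e) \<le> x / e" "x / e \<le> B / e"
    using assms divide_right_mono[of "- B" x e] divide_right_mono[of x B e] by auto
  then show ?thesis by (simp add: le_floor_iff floor_le_iff) linarith
qed

lemma floor_divide_eq_imp_dist_le:
  fixes x y e :: real
  assumes "0 < e" "\<lfloor>x / e\<rfloor> = \<lfloor>y / e\<rfloor>"
  shows "\<bar>x - y\<bar> \<le> e"
proof -
  have "\<bar>x / e - y / e\<bar> < 1"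
    using assms(2) floor_correct[of "x / e"] floor_correct[of "y / e"] by linarith
  then have "\<bar>x - y\<bar> / e < 1" using assms(1) by (simp add: diff_divide_distrib[symmetric])
  then show ?thesis using assms(1) by (simp add: divide_less_eq)
qed

lemma abs_floor_power_step_le:
  fixes t \<xi> :: real
  shows "\<bar>\<xi> * \<lfloor>t * \<xi> ^ l\<rfloor> - \<lfloor>t * \<xi> ^ Suc l\<rfloor>\<bar> \<le> 1 + \<bar>\<xi>\<bar>"
proof -
  have "\<xi> * \<lfloor>t * \<xi> ^ l\<rfloor> - \<lfloor>t * \<xi> ^ Suc l\<rfloor> = frac (t * \<xi> ^ Suc l) - \<xi> * frac (t * \<xi> ^ l)"
    by (simp add: frac_def algebra_simps)
  moreover have "\<bar>\<xi> * frac (t * \<xi> ^ l)\<bar> \<le> \<bar>\<xi>\<bar>"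
    by (simp add: abs_mult frac_lt_1 less_imp_le mult_left_le)
  ultimately show ?thesis using frac_ge_0[of "t * \<xi> ^ Suc l"] frac_lt_1[of "t * \<xi> ^ Suc l"] by linarith
qed

lemma abs_sum_coeff_floor_le:
  fixes t \<xi> H :: real
  assumes t: "0 \<le> t" "t \<le> real M" and "j \<le> n" and aH: "\<forall>i\<le>k. \<bar>real_of_int (a i)\<bar> \<le> H"
  shows "\<bar>\<Sum>i\<le>k. real_of_int (a i) * \<lfloor>t * \<xi> ^ (i + j)\<rfloor>\<bar>
    \<le> real M * (max 1 \<bar>\<xi>\<bar>) ^ n * \<bar>poly_val a \<xi> k\<bar> + (real k + 1) * H"
proof -
  have H0: "0 \<le> H" using aH by (meson abs_ge_zero order_trans le0)
  have "(\<Sum>i\<le>k. real_of_int (a i) * \<lfloor>t * \<xi> ^ (i + j)\<rfloor>)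
      = t * \<xi> ^ j * poly_val a \<xi> k - (\<Sum>i\<le>k. real_of_int (a i) * frac (t * \<xi> ^ (i + j)))"
    by (simp add: frac_def poly_val_def algebra_simps sum_subtractf sum_distrib_left power_add)
  moreover have "\<bar>t * \<xi> ^ j * poly_val a \<xi> k\<bar> \<le> real M * (max 1 \<bar>\<xi>\<bar>) ^ n * \<bar>poly_val a \<xi> k\<bar>"
  proof -
    have "\<bar>\<xi>\<bar> ^ j \<le> (max 1 \<bar>\<xi>\<bar>) ^ j" by (simp add: power_mono)
    also have "\<dots> \<le> (max 1 \<bar>\<xi>\<bar>) ^ n" using \<open>j \<le> n\<close> by (simp add: power_increasing)
    finally show ?thesis unfolding abs_mult power_abs using t by (intro mult_mono) auto
  qed
  moreover have "\<bar>real_of_int (a i) * frac (t * \<xi> ^ (i + j))\<bar> \<le> H" if "i \<le> k" for i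
    using aH that H0 mult_mono[of "\<bar>real_of_int (a i)\<bar>" H "frac (t * \<xi> ^ (i + j))" 1]
    by (simp add: abs_mult frac_ge_0 frac_lt_1 less_imp_le)
  then have "(\<Sum>i\<le>k. \<bar>real_of_int (a i) * frac (t * \<xi> ^ (i + j))\<bar>) \<le> (\<Sum>i\<le>k. H)"
    by (intro sum_mono) simp
  then have "\<bar>\<Sum>i\<le>k. real_of_int (a i) * frac (t * \<xi> ^ (i + j))\<bar> \<le> (real k + 1) * H"
    by (simp add: algebra_simps order_trans[OF sum_abs])
  ultimately show ?thesis by linarith
qed

text \<open>Each \<open>t\<close> with \<open>0 \<le> t \<le> M\<close> goes into a box recording \<open>\<xi> * u l - u (Suc l)\<close> up to \<open>\<epsilon>\<close>
  for \<open>l \<in> F\<close> and the integers \<open>\<Sum>i\<le>k. a i * u (i + j)\<close> exactly, where \<open>u m = \<lfloor>t * \<xi> ^ m\<rfloor>\<close>.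
  By \<open>count\<close> two values of \<open>t\<close> share a box; \<open>y\<close> is the difference of their vectors \<open>u\<close>.\<close>
lemma dirichlet_box:
  fixes \<xi> \<epsilon> H :: real and a :: "nat \<Rightarrow> int"
  defines "X \<equiv> max 1 \<bar>\<xi>\<bar>"
  assumes kn: "k \<le> n" and e0: "0 < \<epsilon>" and e1: "\<epsilon> \<le> 1"
    and aH: "\<forall>i\<le>k. \<bar>real_of_int (a i)\<bar> \<le> H" and F: "finite F" "card F = k - 1"
    and count: "((2 * (1 + \<bar>\<xi>\<bar>) + 3) / \<epsilon>) ^ (k - 1) *
      (2 * (real M * X ^ n * \<bar>poly_val a \<xi> k\<bar> + (real k + 1) * H) + 1) ^ (Suc n - k) < real M + 1"
  shows "\<exists>y::nat \<Rightarrow> int. 1 \<le> y 0 \<and> y 0 \<le> int M \<and> (\<forall>j. \<bar>real_of_int (y 0) * \<xi> ^ j - y j\<bar> < 1) \<and>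
    (\<forall>l\<in>F. \<bar>\<xi> * y l - y (Suc l)\<bar> \<le> \<epsilon>) \<and> (\<forall>j<Suc n - k. (\<Sum>i\<le>k. a i * y (i + j)) = 0)"
proof -
  define NN where "NN = Suc n - k"
  define u where "u m t = \<lfloor>real_of_int t * \<xi> ^ m\<rfloor>" for m and t :: int
  define G where "G l t = \<xi> * real_of_int (u l t) - real_of_int (u (Suc l) t)" for l t
  have G_bound: "\<bar>G l t\<bar> \<le> 1 + \<bar>\<xi>\<bar>" for l t
    unfolding G_def u_def by (rule abs_floor_power_step_le)
  define \<psi> where "\<psi> j t = (\<Sum>i\<le>k. a i * u (i + j) t)" for j t
  define R where "R = real M * X ^ n * \<bar>poly_val a \<xi> k\<bar> + (real k + 1) * H"
  have \<psi>_bound: "\<bar>real_of_int (\<psi> j t)\<bar> \<le> R" if "j < NN" "0 \<le> t" "t \<le> int M" for j t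
    using abs_sum_coeff_floor_le[of "real_of_int t" M j n k a H \<xi>] that kn aH
    unfolding \<psi>_def u_def R_def X_def NN_def by simp
  define A where "A = \<lceil>(1 + \<bar>\<xi>\<bar>) / \<epsilon>\<rceil>"
  define box where "box t = (restrict (\<lambda>l. \<lfloor>G l t / \<epsilon>\<rfloor>) F, restrict (\<lambda>j. \<psi> j t) {..<NN})" for t
  define T where "T = (PiE F (\<lambda>_. {-A..A})) \<times> (PiE {..<NN} (\<lambda>_. {-\<lfloor>R\<rfloor>..\<lfloor>R\<rfloor>}))"
  have "box ` {0..int M} \<subseteq> T"
  proof -
    have "\<psi> j t \<in> {-\<lfloor>R\<rfloor>..\<lfloor>R\<rfloor>}" if "j < NN" "0 \<le> t" "t \<le> int M" for j t
      using \<psi>_bound[OF that] by (simp add: abs_le_iff le_floor_iff floor_le_iff) linarith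
    then have "box t \<in> T" if "t \<in> {0..int M}" for t
      unfolding box_def T_def mem_Times_iff fst_conv snd_conv restrict_PiE_iff
      using floor_divide_mem_box[OF e0 G_bound] that by (auto simp: A_def)
    then show ?thesis by blast
  qed
  moreover have "finite T" unfolding T_def using F by (simp add: finite_PiE)
  moreover have "card T < M + 1"
  proof -
    have "0 \<le> (1 + \<bar>\<xi>\<bar>) / \<epsilon>" using e0 by simp
    then have A0: "0 \<le> A" unfolding A_def by linarith
    have "0 \<le> H" using aH by (meson abs_ge_zero order_trans le0)
    then have R0: "0 \<le> R" unfolding R_def X_def by simp
    have "real (card T) = real_of_int (2 * A + 1) ^ (k - 1) * real_of_int (2 * \<lfloor>R\<rfloor> + 1) ^ NN"
      unfolding T_def using F A0 R0 by (simp add: card_cartesian_product card_PiE)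
    also have "\<dots> \<le> ((2 * (1 + \<bar>\<xi>\<bar>) + 3) / \<epsilon>) ^ (k - 1) * (2 * R + 1) ^ NN"
    proof (intro mult_mono power_mono)
      have "real_of_int (2 * A + 1) \<le> 2 * (1 + \<bar>\<xi>\<bar>) / \<epsilon> + 3" unfolding A_def by linarith
      also have "\<dots> \<le> 2 * (1 + \<bar>\<xi>\<bar>) / \<epsilon> + 3 / \<epsilon>" using e0 e1 by (simp add: le_divide_eq)
      finally show "real_of_int (2 * A + 1) \<le> (2 * (1 + \<bar>\<xi>\<bar>) + 3) / \<epsilon>" by (simp add: add_divide_distrib)
    qed (use A0 R0 e0 in auto)
    also have "\<dots> < real M + 1" using count unfolding R_def NN_def .
    finally show ?thesis by linarith
  qed
  ultimately obtain t1 t2 where t: "0 \<le> t1" "t1 < t2" "t2 \<le> int M" "box t1 = box t2"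
    using pigeonhole_int_interval by blast
  define y where "y m = u m t2 - u m t1" for m
  have "y 0 = t2 - t1" unfolding y_def u_def by simp
  moreover have "\<bar>real_of_int (y 0) * \<xi> ^ j - y j\<bar> < 1" for j
  proof -
    have "real_of_int (y 0) * \<xi> ^ j - y j = frac (real_of_int t2 * \<xi> ^ j) - frac (real_of_int t1 * \<xi> ^ j)"
      using \<open>y 0 = t2 - t1\<close> by (simp add: y_def u_def frac_def algebra_simps)
    then show ?thesis by (smt (verit) frac_ge_0 frac_lt_1)
  qed
  moreover have "\<bar>\<xi> * y l - y (Suc l)\<bar> \<le> \<epsilon>" if "l \<in> F" for l
  proof -
    have "\<lfloor>G l t2 / \<epsilon>\<rfloor> = \<lfloor>G l t1 / \<epsilon>\<rfloor>" using t(4) that unfolding box_def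
      by (metis (mono_tags, lifting) fst_conv restrict_apply')
    then have "\<bar>G l t2 - G l t1\<bar> \<le> \<epsilon>" by (rule floor_divide_eq_imp_dist_le[OF e0])
    then show ?thesis unfolding G_def y_def by (simp add: algebra_simps)
  qed
  moreover have "(\<Sum>i\<le>k. a i * y (i + j)) = 0" if "j < NN" for j
  proof -
    have "\<psi> j t1 = \<psi> j t2" using t(4) that unfolding box_def
      by (metis (mono_tags, lifting) lessThan_iff restrict_apply' snd_conv)
    then show ?thesis unfolding \<psi>_def y_def by (simp add: algebra_simps sum_subtractf)
  qed
  ultimately show ?thesis using t unfolding NN_def by (intro exI[of _ y]) auto
qed

definition simult_approx :: "nat \<Rightarrow> real \<Rightarrow> real \<Rightarrow> real \<Rightarrow> bool" where
  "simult_approx n \<xi> lam X \<longleftrightarrow> (\<exists>x :: nat \<Rightarrow> int. 0 < \<bar>x 0\<bar> \<and> \<bar>real_of_int (x 0)\<bar> \<le> X \<and>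
      (\<forall>m\<in>{1..n}. \<bar>real_of_int (x 0) * \<xi> ^ m - real_of_int (x m)\<bar> \<le> X powr (- lam)))"

lemma abs_approx_le_steps:
  fixes y :: "nat \<Rightarrow> int" and \<xi> c :: real
  assumes steps: "\<forall>l<n. \<bar>\<xi> * y l - y (Suc l)\<bar> \<le> c" and "m \<le> n"
  shows "\<bar>real_of_int (y 0) * \<xi> ^ m - y m\<bar> \<le> real n * (max 1 \<bar>\<xi>\<bar>) ^ n * c"
proof -
  have step: "\<bar>\<xi> ^ (m - Suc l) * (\<xi> * y l - y (Suc l))\<bar> \<le> (max 1 \<bar>\<xi>\<bar>) ^ n * c" if "l < m" for l
  proof -
    have "\<bar>\<xi>\<bar> ^ (m - Suc l) \<le> (max 1 \<bar>\<xi>\<bar>) ^ (m - Suc l)" by (simp add: power_mono)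
    also have "\<dots> \<le> (max 1 \<bar>\<xi>\<bar>) ^ n" using \<open>m \<le> n\<close> by (intro power_increasing) auto
    finally show ?thesis unfolding abs_mult power_abs
      using steps that \<open>m \<le> n\<close> by (intro mult_mono) auto
  qed
  have "real_of_int (y 0) * \<xi> ^ m - y m = (\<Sum>l<m. \<xi> ^ (m - Suc l) * (\<xi> * y l - y (Suc l)))"
    using sum_power_telescope[where z = "\<lambda>l. real_of_int (y l)" and i = m] by (simp add: mult.commute)
  also have "\<bar>\<dots>\<bar> \<le> (\<Sum>l<m. \<bar>\<xi> ^ (m - Suc l) * (\<xi> * y l - y (Suc l))\<bar>)" by (rule sum_abs)
  also have "\<dots> \<le> (\<Sum>l<m. (max 1 \<bar>\<xi>\<bar>) ^ n * c)" by (rule sum_mono) (use step in simp)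
  also have "\<dots> \<le> real n * (max 1 \<bar>\<xi>\<bar>) ^ n * c"
  proof (cases "n = 0")
    case False
    then have "\<bar>\<xi> * y 0 - y (Suc 0)\<bar> \<le> c" using steps by simp
    then have "0 \<le> c" by (rule order_trans[OF abs_ge_zero])
    then show ?thesis using \<open>m \<le> n\<close> by (simp add: mult_right_mono)
  qed (use \<open>m \<le> n\<close> in simp)
  finally show ?thesis .
qed

text \<open>By \<open>quot_coeff_identity\<close>, the differences \<open>g l = \<xi> * y l - y (Suc l)\<close> satisfy the
  Toeplitz equations up to \<open>y j * P \<xi>\<close>, and they are small on \<open>F\<close>.\<close>
lemma box_point_approximates:
  fixes y :: "nat \<Rightarrow> int" and \<xi> :: real
  defines "X \<equiv> max 1 \<bar>\<xi>\<bar>"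
  assumes stable: "toeplitz_stable (quot_coeff a \<xi> k) n k F C H" and kn: "k \<le> n" and e0: "0 \<le> \<epsilon>"
    and y0: "0 \<le> y 0" "y 0 \<le> int M" and near: "\<forall>j. \<bar>real_of_int (y 0) * \<xi> ^ j - y j\<bar> < 1"
    and on_F: "\<forall>l\<in>F. \<bar>\<xi> * y l - y (Suc l)\<bar> \<le> \<epsilon>"
    and kernel: "\<forall>j<Suc n - k. (\<Sum>i\<le>k. a i * y (i + j)) = 0"
  shows "\<forall>m\<in>{1..n}. \<bar>real_of_int (y 0) * \<xi> ^ m - y m\<bar>
    \<le> real n * X ^ n * (C * (\<epsilon> + \<bar>poly_val a \<xi> k\<bar> * (real M * X ^ n + 1) / H))"
proof -
  define g where "g l = \<xi> * real_of_int (y l) - real_of_int (y (Suc l))" for l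
  define d where "d = \<bar>poly_val a \<xi> k\<bar> * (real M * X ^ n + 1)"
  have "1 \<le> X" unfolding X_def by simp
  have y_bound: "\<bar>real_of_int (y j)\<bar> \<le> real M * X ^ n + 1" if "j \<le> n" for j
  proof -
    have "\<bar>\<xi>\<bar> ^ j \<le> X ^ j" unfolding X_def by (simp add: power_mono)
    also have "\<dots> \<le> X ^ n" using \<open>1 \<le> X\<close> that by (simp add: power_increasing)
    finally have "\<bar>real_of_int (y 0) * \<xi> ^ j\<bar> \<le> real M * X ^ n"
      unfolding abs_mult power_abs using y0 near \<open>1 \<le> X\<close>
      by (intro mult_mono) (auto simp: abs_less_iff)
    then show ?thesis using near[rule_format, of j] by linarith
  qed
  have "\<bar>\<Sum>r<k. quot_coeff a \<xi> k r * g (j + r)\<bar> \<le> d" if "j < Suc n - k" for j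
  proof -
    have "(\<Sum>r<k. quot_coeff a \<xi> k r * g (j + r)) = real_of_int (y j) * poly_val a \<xi> k"
      using quot_coeff_identity[where z = "\<lambda>m. real_of_int (y m)" and j = j] kernel that unfolding g_def
      by (simp flip: of_int_mult of_int_sum)
    moreover have "j \<le> n" using that kn by linarith
    then have "\<bar>real_of_int (y j) * poly_val a \<xi> k\<bar> \<le> (real M * X ^ n + 1) * \<bar>poly_val a \<xi> k\<bar>"
      using y_bound[of j] by (simp add: abs_mult mult_right_mono)
    ultimately show ?thesis unfolding d_def by (simp add: mult.commute)
  qed
  moreover have "0 \<le> d" unfolding d_def using \<open>1 \<le> X\<close> by simp
  ultimately have "\<forall>l<n. \<bar>\<xi> * y l - y (Suc l)\<bar> \<le> C * (\<epsilon> + d / H)"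
    using toeplitz_stableD[OF stable e0, of d g] on_F unfolding g_def by blast
  then show ?thesis unfolding d_def X_def by (intro ballI abs_approx_le_steps) auto
qed

section \<open>Choice of the parameters\<close>

text \<open>\<open>dirichlet_box\<close> is used with \<open>\<epsilon> = H powr - \<beta>\<close> and \<open>M \<approx> H powr \<gamma>\<close>:
  the number of boxes is then about \<open>H powr (\<beta> * (k - 1) + (n - k + 1)) = H powr \<gamma>\<close>, and the
  error \<open>H powr - \<beta>\<close> is about \<open>M powr - (\<beta> / \<gamma>)\<close>, where
  \<open>\<beta> / \<gamma> = (w - n + k) / ((k - 1) * w + n)\<close>.\<close>
lemma exponent_relations:
  fixes w lam :: real and n k :: nat
  defines "\<beta> \<equiv> (w + real k - real n) / real k" and "\<gamma> \<equiv> ((real k - 1) * w + real n) / real k"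
  assumes k1: "1 \<le> k" and kn: "k \<le> n" and w: "real n - real k < w"
    and lam: "lam < (w - real n + real k) / ((real k - 1) * w + real n)"
  shows "0 < \<beta>" "\<beta> \<le> w" "1 \<le> \<gamma>" "\<beta> * (real k - 1) + real (Suc n - k) = \<gamma>" "\<gamma> - w = 1 - \<beta>"
    "lam * \<gamma> < \<beta>"
proof -
  have k0: "0 < real k" using k1 by simp
  have w0: "0 < w" using w kn by linarith
  show "0 < \<beta>" unfolding \<beta>_def using w k0 by simp
  have "1 * w \<le> real k * w" using k1 w0 by (intro mult_right_mono) auto
  then have "w + real k - real n \<le> real k * w" using kn by simp
  then show "\<beta> \<le> w" unfolding \<beta>_def using k0 by (simp add: divide_le_eq mult.commute)
  have "real k \<le> (real k - 1) * w + real n" using k1 w0 kn by (simp add: add_increasing)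
  then show "1 \<le> \<gamma>" unfolding \<gamma>_def using k0 by simp
  show "\<beta> * (real k - 1) + real (Suc n - k) = \<gamma>" "\<gamma> - w = 1 - \<beta>"
    unfolding \<beta>_def \<gamma>_def using k0 kn by (simp_all add: of_nat_diff field_simps)
  have "0 < (real k - 1) * w + real n" using \<open>real k \<le> (real k - 1) * w + real n\<close> k0 by linarith
  then have "lam * ((real k - 1) * w + real n) < w - real n + real k"
    using lam by (simp add: less_divide_eq)
  then have "lam * ((real k - 1) * w + real n) / real k < (w - real n + real k) / real k"
    using k0 by (rule divide_strict_right_mono)
  then show "lam * \<gamma> < \<beta>" unfolding \<beta>_def \<gamma>_def by (simp add: algebra_simps)
qed

lemma box_count_less:
  fixes \<xi> H \<beta> \<gamma> \<delta> :: real and n k M :: nat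
  defines "X \<equiv> max 1 \<bar>\<xi>\<bar>"
  defines "K \<equiv> (2 * (1 + \<bar>\<xi>\<bar>) + 3) ^ (k - 1) * (2 * (X ^ n + real k + 1) + 1) ^ (Suc n - k) + 1"
  assumes k1: "1 \<le> k" and H: "1 \<le> H" and \<beta>\<gamma>: "\<beta> * (real k - 1) + real (Suc n - k) = \<gamma>"
    and M: "K * H powr \<gamma> \<le> real M" and M\<delta>: "real M * \<delta> \<le> H" and \<delta>: "0 \<le> \<delta>"
  shows "((2 * (1 + \<bar>\<xi>\<bar>) + 3) / H powr - \<beta>) ^ (k - 1) *
    (2 * (real M * X ^ n * \<delta> + (real k + 1) * H) + 1) ^ (Suc n - k) < real M + 1"
proof -
  have X1: "1 \<le> X" unfolding X_def by simp
  have "real M * X ^ n * \<delta> \<le> X ^ n * H" using M\<delta> X1 by (simp add: mult_ac mult_left_mono)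
  then have "2 * (real M * X ^ n * \<delta> + (real k + 1) * H) + 1 \<le> (2 * (X ^ n + real k + 1) + 1) * H"
    using H by (simp add: algebra_simps)
  then have "((2 * (1 + \<bar>\<xi>\<bar>) + 3) / H powr - \<beta>) ^ (k - 1) *
      (2 * (real M * X ^ n * \<delta> + (real k + 1) * H) + 1) ^ (Suc n - k)
      \<le> ((2 * (1 + \<bar>\<xi>\<bar>) + 3) * H powr \<beta>) ^ (k - 1) * ((2 * (X ^ n + real k + 1) + 1) * H) ^ (Suc n - k)"
    using X1 H \<delta> by (intro mult_mono power_mono) (auto simp: powr_minus_divide)
  also have "\<dots> = (K - 1) * ((H powr \<beta>) ^ (k - 1) * H ^ (Suc n - k))"
    unfolding K_def by (simp add: power_mult_distrib)
  also have "(H powr \<beta>) ^ (k - 1) * H ^ (Suc n - k) = H powr \<gamma>"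
    unfolding \<beta>\<gamma>[symmetric] using H k1 by (simp add: powr_add powr_powr powr_realpow[symmetric] of_nat_diff)
  also have "(K - 1) * H powr \<gamma> < real M + 1"
    using M powr_ge_zero[of H \<gamma>] unfolding left_diff_distrib by linarith
  finally show ?thesis .
qed

lemma simult_approx_of_small_value:
  fixes \<xi> H w \<beta> \<gamma> lam C :: real and a :: "nat \<Rightarrow> int" and n k :: nat
  defines "X \<equiv> max 1 \<bar>\<xi>\<bar>"
  defines "K \<equiv> (2 * (1 + \<bar>\<xi>\<bar>) + 3) ^ (k - 1) * (2 * (X ^ n + real k + 1) + 1) ^ (Suc n - k) + 1"
  assumes k1: "1 \<le> k" and kn: "k \<le> n" and \<beta>: "0 < \<beta>" "\<beta> \<le> w" and \<gamma>: "1 \<le> \<gamma>"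
    and \<beta>\<gamma>: "\<beta> * (real k - 1) + real (Suc n - k) = \<gamma>" "\<gamma> - w = 1 - \<beta>"
    and lam0: "0 \<le> lam" and C0: "0 \<le> C"
    and H: "1 \<le> H" "2 * K \<le> H powr \<beta>"
      "real n * X ^ n * C * (2 + 2 * K * X ^ n) * (2 * K) powr lam \<le> H powr (\<beta> - lam * \<gamma>)"
    and aH: "\<forall>i\<le>k. \<bar>real_of_int (a i)\<bar> \<le> H" and small: "\<bar>poly_val a \<xi> k\<bar> \<le> H powr - w"
    and F: "finite F" "card F = k - 1" and stable: "toeplitz_stable (quot_coeff a \<xi> k) n k F C H"
  shows "\<exists>Y\<ge>H. simult_approx n \<xi> lam Y"
proof -
  define \<epsilon> where "\<epsilon> = H powr - \<beta>"
  define M where "M = nat \<lceil>K * H powr \<gamma>\<rceil>"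
  define \<delta> where "\<delta> = \<bar>poly_val a \<xi> k\<bar>"
  have X1: "1 \<le> X" unfolding X_def by simp
  have K1: "1 \<le> K" unfolding K_def using X1 by simp
  have H0: "0 < H" using H by simp
  have H\<gamma>: "H \<le> H powr \<gamma>" using powr_mono[OF \<gamma> H(1)] H0 by simp
  have M_low: "K * H powr \<gamma> \<le> real M" unfolding M_def by linarith
  have KH1: "1 * 1 \<le> K * H powr \<gamma>" using K1 H(1) H\<gamma> by (intro mult_mono) auto
  then have M_up: "real M \<le> 2 * K * H powr \<gamma>" unfolding M_def by linarith
  have e0: "0 < \<epsilon>" and e1: "\<epsilon> \<le> 1"
    unfolding \<epsilon>_def using H \<beta> by (auto simp: powr_minus_divide ge_one_powr_ge_zero)
  have K\<epsilon>: "2 * K * \<epsilon> \<le> 1" unfolding \<epsilon>_def using H(2) H0 by (simp add: powr_minus_divide divide_le_eq)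
  have M\<delta>: "real M * \<delta> \<le> 2 * K * \<epsilon> * H"
  proof -
    have "real M * \<delta> \<le> (2 * K * H powr \<gamma>) * H powr - w"
      using M_up small unfolding \<delta>_def by (intro mult_mono) auto
    also have "\<dots> = 2 * K * (H powr \<gamma> * H powr - w)" by (simp add: mult_ac)
    also have "H powr \<gamma> * H powr - w = H powr (- \<beta> + 1)"
      using \<beta>\<gamma>(2) by (simp add: powr_add[symmetric])
    also have "\<dots> = \<epsilon> * H" unfolding \<epsilon>_def using H0 by (simp add: powr_diff powr_minus_divide)
    finally show ?thesis by (simp add: mult_ac)
  qed
  have "2 * K * \<epsilon> * H \<le> 1 * H" using K\<epsilon> H0 by (intro mult_right_mono) auto
  then have "real M * \<delta> \<le> H" using M\<delta> by simp
  then have count: "((2 * (1 + \<bar>\<xi>\<bar>) + 3) / \<epsilon>) ^ (k - 1) *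
      (2 * (real M * X ^ n * \<delta> + (real k + 1) * H) + 1) ^ (Suc n - k) < real M + 1"
    unfolding \<epsilon>_def X_def using box_count_less[OF k1 H(1) \<beta>\<gamma>(1) M_low[unfolded K_def X_def]] \<delta>_def
    by simp
  obtain y where y: "1 \<le> y 0" "y 0 \<le> int M" "\<forall>j. \<bar>real_of_int (y 0) * \<xi> ^ j - y j\<bar> < 1"
    "\<forall>l\<in>F. \<bar>\<xi> * y l - y (Suc l)\<bar> \<le> \<epsilon>" "\<forall>j<Suc n - k. (\<Sum>i\<le>k. a i * y (i + j)) = 0"
    using dirichlet_box[OF kn e0 e1 aH F count[unfolded \<delta>_def X_def]] by blast
  have "\<delta> \<le> \<epsilon> * H"
  proof -
    have "\<delta> \<le> H powr - \<beta>" using small \<beta> H unfolding \<delta>_def by (smt (verit) powr_mono)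
    also have "\<dots> \<le> \<epsilon> * H" unfolding \<epsilon>_def using H(1) mult_left_mono[of 1 H "H powr - \<beta>"] by simp
    finally show ?thesis .
  qed
  moreover have "real M * \<delta> * X ^ n \<le> 2 * K * \<epsilon> * H * X ^ n" using M\<delta> X1 by (intro mult_right_mono) auto
  ultimately have "\<delta> * (real M * X ^ n + 1) \<le> ((1 + 2 * K * X ^ n) * \<epsilon>) * H"
    by (simp add: algebra_simps)
  then have "\<epsilon> + \<delta> * (real M * X ^ n + 1) / H \<le> (2 + 2 * K * X ^ n) * \<epsilon>"
    using H0 by (simp add: divide_le_eq algebra_simps)
  then have "real n * X ^ n * (C * (\<epsilon> + \<delta> * (real M * X ^ n + 1) / H))
      \<le> (real n * X ^ n * C * (2 + 2 * K * X ^ n)) * \<epsilon>"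
    using C0 X1 by (simp add: mult_left_mono mult.assoc)
  also have "\<dots> = (real n * X ^ n * C * (2 + 2 * K * X ^ n) * (2 * K) powr lam) * ((2 * K) powr - lam * \<epsilon>)"
  proof -
    have "(2 * K) powr lam * (2 * K) powr - lam = 1" using K1 by (simp add: powr_minus)
    then show ?thesis by (simp add: mult_ac)
  qed
  also have "\<dots> \<le> H powr (\<beta> - lam * \<gamma>) * ((2 * K) powr - lam * \<epsilon>)"
    using H(3) e0 by (intro mult_right_mono) auto
  also have "\<dots> = (2 * K * H powr \<gamma>) powr - lam"
    unfolding \<epsilon>_def using K1 H0 by (simp add: powr_mult powr_powr powr_add[symmetric] mult_ac)
  also have "\<dots> \<le> real M powr - lam"
    using M_up M_low KH1 lam0 by (intro powr_mono2') auto
  finally have err: "real n * X ^ n * (C * (\<epsilon> + \<delta> * (real M * X ^ n + 1) / H)) \<le> real M powr - lam" .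
  have "\<forall>m\<in>{1..n}. \<bar>real_of_int (y 0) * \<xi> ^ m - y m\<bar> \<le> real n * X ^ n * (C * (\<epsilon> + \<delta> * (real M * X ^ n + 1) / H))"
    using box_point_approximates[OF stable kn less_imp_le[OF e0] _ y(2-5)] y(1) unfolding \<delta>_def X_def by simp
  then have approx: "\<forall>m\<in>{1..n}. \<bar>real_of_int (y 0) * \<xi> ^ m - y m\<bar> \<le> real M powr - lam"
    using err by (meson order_trans)
  have "H \<le> real M"
    using M_low H\<gamma> mult_right_mono[OF K1, of "H powr \<gamma>"] by simp
  moreover have "simult_approx n \<xi> lam (real M)"
    unfolding simult_approx_def using y(1,2) approx by (intro exI[of _ y]) auto
  ultimately show ?thesis by blast
qed

lemma eventually_simult_approx:
  fixes \<xi> w lam C :: real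
  assumes k1: "1 \<le> k" and kn: "k \<le> n" and w: "real n - real k < w" and lam0: "0 \<le> lam"
    and lam: "lam < (w - real n + real k) / ((real k - 1) * w + real n)" and C0: "0 \<le> C"
  shows "\<forall>\<^sub>F H in at_top. \<forall>a F. (\<forall>i\<le>k. \<bar>real_of_int (a i)\<bar> \<le> H) \<longrightarrow>
    \<bar>poly_val a \<xi> k\<bar> \<le> H powr - w \<longrightarrow> finite F \<longrightarrow> card F = k - 1 \<longrightarrow>
    toeplitz_stable (quot_coeff a \<xi> k) n k F C H \<longrightarrow> (\<exists>Y\<ge>H. simult_approx n \<xi> lam Y)"
proof -
  define \<beta> where "\<beta> = (w + real k - real n) / real k"
  define \<gamma> where "\<gamma> = ((real k - 1) * w + real n) / real k"
  note exps = exponent_relations[OF k1 kn w lam, folded \<beta>_def \<gamma>_def]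
  define X where "X = max 1 \<bar>\<xi>\<bar>"
  define K where "K = (2 * (1 + \<bar>\<xi>\<bar>) + 3) ^ (k - 1) * (2 * (X ^ n + real k + 1) + 1) ^ (Suc n - k) + 1"
  have "\<forall>\<^sub>F H in at_top. c \<le> H powr p" if "0 < p" for c p :: real
    using real_powr_at_top[OF that] by (simp add: filterlim_at_top)
  then have "\<forall>\<^sub>F H in at_top. 1 \<le> H \<and> 2 * K \<le> H powr \<beta> \<and>
      real n * X ^ n * C * (2 + 2 * K * X ^ n) * (2 * K) powr lam \<le> H powr (\<beta> - lam * \<gamma>)"
    using exps by (intro eventually_conj eventually_ge_at_top) auto
  then show ?thesis
    by eventually_elim
      (use simult_approx_of_small_value[OF k1 kn exps(1,2,3,4,5) lam0 C0] in \<open>auto simp: X_def K_def\<close>)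
qed

section \<open>The exponents as suprema\<close>

definition lambda_set :: "nat \<Rightarrow> real \<Rightarrow> real set" where
  "lambda_set n \<xi> = {lam. \<forall>X0. \<exists>X\<ge>X0. simult_approx n \<xi> lam X}"

definition w_set :: "nat \<Rightarrow> real \<Rightarrow> ((nat \<Rightarrow> int) \<Rightarrow> bool) \<Rightarrow> real set" where
  "w_set k \<xi> Q = {w. \<forall>X0. \<exists>X\<ge>X0. \<exists>x. 0 < \<bar>poly_val x \<xi> k\<bar> \<and> \<bar>poly_val x \<xi> k\<bar> \<le> X powr - w \<and>
      (\<forall>j\<le>k. \<bar>real_of_int (x j)\<bar> \<le> X) \<and> Q x}"

lemma lambda_exp_eq_Sup: "lambda_exp n \<xi> = Sup (ereal ` lambda_set n \<xi>)"
  by (simp add: lambda_exp_def lambda_set_def simult_approx_def)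

lemma w_exp_eq_Sup: "w_exp k \<xi> = Sup (ereal ` w_set k \<xi> (\<lambda>_. True))"
  by (simp add: w_exp_def w_set_def poly_val_def)

lemma w_lead_exp_eq_Sup: "w_lead_exp k \<xi> = Sup (ereal ` w_set k \<xi> (\<lambda>x. \<forall>j<k. \<bar>x j\<bar> \<le> \<bar>x k\<bar>))"
  by (simp add: w_lead_exp_def w_set_def poly_val_def)

lemma negative_mem_lambda_set:
  assumes "lam < 0"
  shows "lam \<in> lambda_set n \<xi>"
  unfolding lambda_set_def
proof (intro CollectI allI)
  fix X0 :: real
  define x :: "nat \<Rightarrow> int" where "x m = (if m = 0 then 1 else \<lfloor>\<xi> ^ m\<rfloor>)" for m
  have "1 \<le> max 1 X0 powr - lam" using assms by (intro ge_one_powr_ge_zero) auto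
  moreover have "\<bar>real_of_int (x 0) * \<xi> ^ m - x m\<bar> \<le> 1" if "m \<in> {1..n}" for m
    using that by (simp add: x_def frac_def[symmetric] frac_lt_1 less_imp_le)
  ultimately have "simult_approx n \<xi> lam (max 1 X0)"
    unfolding simult_approx_def by (intro exI[of _ x]) (force simp: x_def)
  then show "\<exists>X\<ge>X0. simult_approx n \<xi> lam X" by (intro exI[of _ "max 1 X0"]) auto
qed

lemma minus_one_mem_w_set:
  assumes "\<xi> \<noteq> 0" "Q (\<lambda>j. if j = k then 1 else 0)"
  shows "-1 \<in> w_set k \<xi> Q"
  unfolding w_set_def
proof (intro CollectI allI)
  fix X0 :: real
  define x :: "nat \<Rightarrow> int" where "x = (\<lambda>j. if j = k then 1 else 0)"
  have "poly_val x \<xi> k = (\<Sum>i\<le>k. if i = k then \<xi> ^ i else 0)"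
    unfolding poly_val_def by (intro sum.cong) (auto simp: x_def)
  then have "poly_val x \<xi> k = \<xi> ^ k" by simp
  then show "\<exists>X\<ge>X0. \<exists>x. 0 < \<bar>poly_val x \<xi> k\<bar> \<and> \<bar>poly_val x \<xi> k\<bar> \<le> X powr - (- 1) \<and>
      (\<forall>j\<le>k. \<bar>real_of_int (x j)\<bar> \<le> X) \<and> Q x"
    using assms by (intro exI[of _ "max (max 1 X0) (\<bar>\<xi>\<bar> ^ k)"] conjI exI[of _ x])
      (auto simp: x_def power_abs)
qed

text \<open>There are finitely many polynomials of bounded height.\<close>
lemma poly_val_bounded_away_from_0:
  "\<exists>\<eta>>0. \<forall>x. (\<forall>j\<le>k. \<bar>real_of_int (x j)\<bar> \<le> B) \<longrightarrow> poly_val x \<xi> k \<noteq> 0 \<longrightarrow> \<eta> \<le> \<bar>poly_val x \<xi> k\<bar>"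
proof -
  define V where "V = abs ` ((\<lambda>h. poly_val h \<xi> k) ` (PiE {..k} (\<lambda>_. {-\<lfloor>B\<rfloor>..\<lfloor>B\<rfloor>})) - {0})"
  have "finite V" unfolding V_def by (intro finite_imageI finite_Diff finite_PiE) auto
  moreover have "\<bar>poly_val x \<xi> k\<bar> \<in> V"
    if xB: "\<forall>j\<le>k. \<bar>real_of_int (x j)\<bar> \<le> B" and nz: "poly_val x \<xi> k \<noteq> 0" for x
  proof -
    have "x j \<in> {-\<lfloor>B\<rfloor>..\<lfloor>B\<rfloor>}" if "j \<le> k" for j
    proof -
      have "real_of_int (x j) \<le> B" "real_of_int (- x j) \<le> B" using \<open>j \<le> k\<close> xB by auto
      then have "x j \<le> \<lfloor>B\<rfloor>" "- x j \<le> \<lfloor>B\<rfloor>" by (simp_all only: le_floor_iff)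
      then show ?thesis by simp
    qed
    then have "restrict x {..k} \<in> PiE {..k} (\<lambda>_. {-\<lfloor>B\<rfloor>..\<lfloor>B\<rfloor>})" by auto
    moreover have "poly_val (restrict x {..k}) \<xi> k = poly_val x \<xi> k"
      unfolding poly_val_def by (intro sum.cong) auto
    ultimately show ?thesis unfolding V_def using nz by (metis DiffI image_eqI singletonD)
  qed
  moreover have "\<forall>v\<in>V. 0 < v" unfolding V_def by auto
  ultimately show ?thesis
    by (intro exI[of _ "Min (insert 1 V)"]) auto
qed

lemma exists_large_height_small_value:
  assumes w: "w \<in> w_set k \<xi> Q" "0 < w"
  shows "\<exists>x i. Q x \<and> i \<le> k \<and> B < \<bar>real_of_int (x i)\<bar> \<and> (\<forall>j\<le>k. \<bar>x j\<bar> \<le> \<bar>x i\<bar>) \<and>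
    0 < \<bar>poly_val x \<xi> k\<bar> \<and> \<bar>poly_val x \<xi> k\<bar> \<le> \<bar>real_of_int (x i)\<bar> powr - w"
proof -
  obtain \<eta> where \<eta>: "0 < \<eta>"
    "\<forall>x. (\<forall>j\<le>k. \<bar>real_of_int (x j)\<bar> \<le> B) \<longrightarrow> poly_val x \<xi> k \<noteq> 0 \<longrightarrow> \<eta> \<le> \<bar>poly_val x \<xi> k\<bar>"
    using poly_val_bounded_away_from_0 by blast
  have "\<forall>\<^sub>F X in at_top. 1 \<le> X \<and> 2 / \<eta> \<le> X powr w"
    using real_powr_at_top[OF w(2)] by (intro eventually_conj eventually_ge_at_top) (simp add: filterlim_at_top)
  then obtain X0 where X0: "\<And>X. X0 \<le> X \<Longrightarrow> 1 \<le> X \<and> 2 / \<eta> \<le> X powr w"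
    unfolding eventually_at_top_linorder by blast
  obtain X x where X: "X0 \<le> X" and nz: "0 < \<bar>poly_val x \<xi> k\<bar>" and small: "\<bar>poly_val x \<xi> k\<bar> \<le> X powr - w"
    and xX: "\<forall>j\<le>k. \<bar>real_of_int (x j)\<bar> \<le> X" and "Q x"
    using w(1) unfolding w_set_def by blast
  have "X powr - w \<le> \<eta> / 2" using X0[OF X] \<eta>(1) by (simp add: powr_minus_divide field_simps)
  then have "\<bar>poly_val x \<xi> k\<bar> < \<eta>" using small \<eta>(1) by linarith
  moreover have "\<not> (\<forall>j\<le>k. \<bar>real_of_int (x j)\<bar> \<le> B)"
  proof
    assume "\<forall>j\<le>k. \<bar>real_of_int (x j)\<bar> \<le> B"
    then have "\<eta> \<le> \<bar>poly_val x \<xi> k\<bar>" using \<eta>(2) nz by simp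
    then show False using \<open>\<bar>poly_val x \<xi> k\<bar> < \<eta>\<close> by linarith
  qed
  ultimately obtain j where j: "j \<le> k" "B < \<bar>real_of_int (x j)\<bar>" by (auto simp: not_le)
  have fin: "finite ((\<lambda>j. \<bar>x j\<bar>) ` {..k})" "(\<lambda>j. \<bar>x j\<bar>) ` {..k} \<noteq> {}" by auto
  obtain i where i: "i \<le> k" "\<bar>x i\<bar> = Max ((\<lambda>j. \<bar>x j\<bar>) ` {..k})" using Max_in[OF fin] by (metis atMost_iff imageE)
  then have i_max: "\<forall>j\<le>k. \<bar>x j\<bar> \<le> \<bar>x i\<bar>" using Max_ge[OF fin(1)] by auto
  then have "\<bar>real_of_int (x j)\<bar> \<le> \<bar>real_of_int (x i)\<bar>" using j(1) by (metis of_int_abs of_int_le_iff)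
  then have "B < \<bar>real_of_int (x i)\<bar>" using j(2) by linarith
  moreover have "0 < \<bar>real_of_int (x i)\<bar>"
  proof (rule ccontr)
    assume "\<not> 0 < \<bar>real_of_int (x i)\<bar>"
    then have "\<bar>x i\<bar> \<le> 0" by simp
    then have "\<forall>j\<le>k. x j = 0" using i_max by fastforce
    then show False using nz by (simp add: poly_val_def)
  qed
  then have "X powr - w \<le> \<bar>real_of_int (x i)\<bar> powr - w"
    using xX i(1) w(2) by (intro powr_mono2') auto
  ultimately show ?thesis using i(1) i_max nz small \<open>Q x\<close> by (intro exI[of _ x] exI[of _ i]) auto
qed

lemma mem_lambda_setI:
  assumes k1: "1 \<le> k" and kn: "k \<le> n" and w: "w \<in> w_set k \<xi> Q" "real n - real k < w"
    and lam0: "0 \<le> lam" and lam: "lam < (w - real n + real k) / ((real k - 1) * w + real n)"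
    and C0: "0 \<le> C"
    and stable: "\<And>x i. Q x \<Longrightarrow> i \<le> k \<Longrightarrow> 2 \<le> \<bar>real_of_int (x i)\<bar> \<Longrightarrow> \<forall>j\<le>k. \<bar>x j\<bar> \<le> \<bar>x i\<bar> \<Longrightarrow>
      0 < \<bar>poly_val x \<xi> k\<bar> \<Longrightarrow> \<bar>poly_val x \<xi> k\<bar> \<le> \<bar>real_of_int (x i)\<bar> powr - w \<Longrightarrow>
      \<exists>F. finite F \<and> card F = k - 1 \<and> toeplitz_stable (quot_coeff x \<xi> k) n k F C \<bar>real_of_int (x i)\<bar>"
  shows "lam \<in> lambda_set n \<xi>"
  unfolding lambda_set_def
proof (intro CollectI allI)
  fix X0 :: real
  obtain H1 where H1: "\<And>H a F. H1 \<le> H \<Longrightarrow> \<forall>i\<le>k. \<bar>real_of_int (a i)\<bar> \<le> H \<Longrightarrow>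
      \<bar>poly_val a \<xi> k\<bar> \<le> H powr - w \<Longrightarrow> finite F \<Longrightarrow> card F = k - 1 \<Longrightarrow>
      toeplitz_stable (quot_coeff a \<xi> k) n k F C H \<Longrightarrow> \<exists>Y\<ge>H. simult_approx n \<xi> lam Y"
    using eventually_simult_approx[OF k1 kn w(2) lam0 lam C0, of \<xi>]
    unfolding eventually_at_top_linorder by blast
  have "0 < w" using w(2) kn by linarith
  then obtain x i where x: "Q x" "i \<le> k" "max (max H1 X0) 2 < \<bar>real_of_int (x i)\<bar>"
      "\<forall>j\<le>k. \<bar>x j\<bar> \<le> \<bar>x i\<bar>" "0 < \<bar>poly_val x \<xi> k\<bar>" "\<bar>poly_val x \<xi> k\<bar> \<le> \<bar>real_of_int (x i)\<bar> powr - w"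
    using exists_large_height_small_value[OF w(1)] by blast
  then obtain F where "finite F" "card F = k - 1" "toeplitz_stable (quot_coeff x \<xi> k) n k F C \<bar>real_of_int (x i)\<bar>"
    using stable[of x i] by auto
  moreover have "\<forall>j\<le>k. \<bar>real_of_int (x j)\<bar> \<le> \<bar>real_of_int (x i)\<bar>" using x(4) by (metis of_int_abs of_int_le_iff)
  ultimately obtain Y where "\<bar>real_of_int (x i)\<bar> \<le> Y" "simult_approx n \<xi> lam Y"
    using H1[of "\<bar>real_of_int (x i)\<bar>" x F] x by auto
  then show "\<exists>X\<ge>X0. simult_approx n \<xi> lam X" using x(3) by (intro exI[of _ Y]) auto
qed

lemma ereal_le_Sup_image_ereal:
  fixes L :: "real set"
  assumes "\<And>l. l < v \<Longrightarrow> l \<in> L"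
  shows "ereal v \<le> Sup (ereal ` L)"
proof (rule dense_le)
  fix y :: ereal
  assume "y < ereal v"
  then show "y \<le> Sup (ereal ` L)"
    by (cases y) (auto intro!: Sup_upper imageI assms)
qed

text \<open>For \<open>0 \<le> lam < 1 / (k - 1)\<close>, the inverse of the increasing map
  \<open>w \<mapsto> (w - n + k) / ((k - 1) * w + n)\<close> at \<open>lam\<close>.\<close>
definition bound_inv :: "nat \<Rightarrow> nat \<Rightarrow> real \<Rightarrow> real" where
  "bound_inv n k lam = (lam * real n + real n - real k) / (1 - lam * (real k - 1))"

lemma less_bound_iff_bound_inv_less:
  assumes den: "0 < (real k - 1) * w + real n" and lam: "lam * (real k - 1) < 1"
  shows "lam < (w - real n + real k) / ((real k - 1) * w + real n) \<longleftrightarrow> bound_inv n k lam < w"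
proof -
  have "lam < (w - real n + real k) / ((real k - 1) * w + real n)
      \<longleftrightarrow> lam * ((real k - 1) * w + real n) < w - real n + real k"
    using den by (simp add: less_divide_eq)
  also have "\<dots> \<longleftrightarrow> lam * real n + real n - real k < w * (1 - lam * (real k - 1))"
    by (simp add: algebra_simps)
  also have "\<dots> \<longleftrightarrow> bound_inv n k lam < w"
    using lam by (simp add: bound_inv_def divide_less_eq)
  finally show ?thesis .
qed

lemma bound_denominator_pos:
  assumes "1 \<le> k" "k \<le> n" "-1 \<le> w"
  shows "0 < (real k - 1) * w + real n"
proof -
  have "(real k - 1) * (-1) \<le> (real k - 1) * w" using assms by (intro mult_left_mono) auto
  then show ?thesis using assms by (simp add: algebra_simps)
qed

lemma bound_less_inverse:
  assumes "2 \<le> k" "k \<le> n" "-1 \<le> w"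
  shows "(w - real n + real k) / ((real k - 1) * w + real n) < 1 / (real k - 1)"
proof -
  have "(real k - 1) * (real k - real n) \<le> 0" using assms by (intro mult_nonneg_nonpos) auto
  then have "(real k - 1) * (w - real n + real k) < (real k - 1) * w + real n"
    using assms by (simp add: algebra_simps)
  then show ?thesis using bound_denominator_pos[of k n w] assms by (simp add: divide_less_eq field_simps)
qed

lemma bound_fun_Sup_le_Sup:
  fixes W L :: "real set"
  assumes k2: "2 \<le> k" and kn: "k \<le> n" and W: "-1 \<in> W"
    and neg: "\<And>lam. lam < 0 \<Longrightarrow> lam \<in> L"
    and pos: "\<And>w lam. w \<in> W \<Longrightarrow> real n - real k < w \<Longrightarrow> 0 \<le> lam \<Longrightarrow>
      lam < (w - real n + real k) / ((real k - 1) * w + real n) \<Longrightarrow> lam \<in> L"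
  shows "bound_fun n k (Sup (ereal ` W)) \<le> Sup (ereal ` L)"
proof -
  have key: "lam \<in> L" if lam: "lam * (real k - 1) < 1" and below: "ereal (bound_inv n k lam) < Sup (ereal ` W)"
    for lam
  proof (cases "lam < 0")
    case False
    obtain w where w: "w \<in> W" "bound_inv n k lam < w" using below by (auto simp: less_Sup_iff)
    have "0 \<le> lam * (real n + (real k - 1) * (real n - real k))" using False k2 kn by simp
    then have "(real n - real k) * (1 - lam * (real k - 1)) \<le> lam * real n + real n - real k"
      by (simp add: algebra_simps)
    then have "real n - real k \<le> bound_inv n k lam"
      using lam by (simp add: bound_inv_def le_divide_eq)
    then have "real n - real k < w" "0 < (real k - 1) * w + real n"
      using w(2) k2 kn by (auto intro: add_nonneg_pos)
    then show ?thesis using pos[OF w(1)] False w(2) lam less_bound_iff_bound_inv_less by auto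
  qed (rule neg)
  have "ereal (-1) \<le> Sup (ereal ` W)" using W by (auto intro: Sup_upper)
  then show ?thesis
  proof (cases "Sup (ereal ` W)")
    case (real r)
    have "ereal ((r - real n + real k) / ((real k - 1) * r + real n)) \<le> Sup (ereal ` L)"
    proof (rule ereal_le_Sup_image_ereal)
      fix lam assume lam: "lam < (r - real n + real k) / ((real k - 1) * r + real n)"
      have "-1 \<le> r" using \<open>ereal (-1) \<le> Sup (ereal ` W)\<close> real by simp
      then have "lam < 1 / (real k - 1)" using lam bound_less_inverse[OF k2 kn] by force
      then have lamk: "lam * (real k - 1) < 1" using k2 by (simp add: less_divide_eq)
      moreover have "0 < (real k - 1) * r + real n" using \<open>-1 \<le> r\<close> k2 kn by (intro bound_denominator_pos) auto
      ultimately show "lam \<in> L" using key lam real less_bound_iff_bound_inv_less by auto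
    qed
    then show ?thesis using real by (simp add: bound_fun_def)
  next
    case PInf
    have "ereal (1 / (real k - 1)) \<le> Sup (ereal ` L)"
      using key PInf k2 by (intro ereal_le_Sup_image_ereal) (simp add: less_divide_eq)
    then show ?thesis using PInf by (simp add: bound_fun_def)
  qed (simp add: bound_fun_def)
qed

lemma lambda_exp_ge_bound_w_lead_exp:
  assumes k2: "2 \<le> k" and kn: "k \<le> n" and "\<xi> \<noteq> 0"
  shows "bound_fun n k (w_lead_exp k \<xi>) \<le> lambda_exp n \<xi>"
  unfolding lambda_exp_eq_Sup w_lead_exp_eq_Sup
proof (rule bound_fun_Sup_le_Sup[OF k2 kn minus_one_mem_w_set[OF \<open>\<xi> \<noteq> 0\<close>] negative_mem_lambda_set])
  fix w lam
  assume w: "w \<in> w_set k \<xi> (\<lambda>x. \<forall>j<k. \<bar>x j\<bar> \<le> \<bar>x k\<bar>)" "real n - real k < w"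
    and lam: "0 \<le> lam" "lam < (w - real n + real k) / ((real k - 1) * w + real n)"
  show "lam \<in> lambda_set n \<xi>"
  proof (rule mem_lambda_setI[OF _ kn w lam, where C = "(1 + real k * ((real k + 1) * (max 1 \<bar>\<xi>\<bar>) ^ k)) ^ n"])
    fix x :: "nat \<Rightarrow> int" and i
    assume lead: "\<forall>j<k. \<bar>x j\<bar> \<le> \<bar>x k\<bar>" and i: "i \<le> k" "2 \<le> \<bar>real_of_int (x i)\<bar>"
      and max: "\<forall>j\<le>k. \<bar>x j\<bar> \<le> \<bar>x i\<bar>"
    have "\<bar>x i\<bar> \<le> \<bar>x k\<bar>" using lead i(1) by (cases "i = k") auto
    then have "\<bar>x i\<bar> = \<bar>x k\<bar>" using max by (simp add: order_antisym)
    moreover have "x i \<noteq> 0" using i(2) by auto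
    ultimately have "\<forall>j\<le>k. \<bar>x j\<bar> \<le> \<bar>x k\<bar>" "\<bar>real_of_int (x i)\<bar> = \<bar>real_of_int (x k)\<bar>" "x k \<noteq> 0"
      using max by (auto simp flip: of_int_abs)
    then show "\<exists>F. finite F \<and> card F = k - 1 \<and> toeplitz_stable (quot_coeff x \<xi> k) n k F
        ((1 + real k * ((real k + 1) * (max 1 \<bar>\<xi>\<bar>) ^ k)) ^ n) \<bar>real_of_int (x i)\<bar>"
      using k2 toeplitz_stable_quot_coeff_lead[of k x \<xi> n] by (intro exI[of _ "{..<k - 1}"]) auto
  qed (use k2 in auto)
qed (simp_all add: minus_one_mem_w_set)

lemma lambda_exp_ge_bound_w_exp:
  assumes k2: "2 \<le> k" and kn: "k \<le> n" and cases: "k = 2 \<or> n = k + 1" and "\<xi> \<noteq> 0"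
  shows "bound_fun n k (w_exp k \<xi>) \<le> lambda_exp n \<xi>"
  unfolding lambda_exp_eq_Sup w_exp_eq_Sup
proof (rule bound_fun_Sup_le_Sup[OF k2 kn minus_one_mem_w_set[OF \<open>\<xi> \<noteq> 0\<close>] negative_mem_lambda_set])
  fix w lam
  assume w: "w \<in> w_set k \<xi> (\<lambda>_. True)" "real n - real k < w"
    and lam: "0 \<le> lam" "lam < (w - real n + real k) / ((real k - 1) * w + real n)"
  show "lam \<in> lambda_set n \<xi>"
  proof (rule mem_lambda_setI[OF _ kn w lam,
        where C = "real n * (2 * (1 + \<bar>\<xi>\<bar>)) + 9 ^ Suc k * (1 + real k) * (2 * (1 + \<bar>\<xi>\<bar>))"])
    fix x :: "nat \<Rightarrow> int" and i
    assume "i \<le> k" "2 \<le> \<bar>real_of_int (x i)\<bar>"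
      "\<bar>poly_val x \<xi> k\<bar> \<le> \<bar>real_of_int (x i)\<bar> powr - w"
    moreover have "\<bar>real_of_int (x i)\<bar> powr - w \<le> 1"
      using \<open>2 \<le> \<bar>real_of_int (x i)\<bar>\<close> w(2) kn by (auto simp: powr_minus_divide ge_one_powr_ge_zero)
    ultimately have "\<bar>poly_val x \<xi> k\<bar> \<le> \<bar>real_of_int (x i)\<bar> / 2" by linarith
    then show "\<exists>F. finite F \<and> card F = k - 1 \<and> toeplitz_stable (quot_coeff x \<xi> k) n k F
        (real n * (2 * (1 + \<bar>\<xi>\<bar>)) + 9 ^ Suc k * (1 + real k) * (2 * (1 + \<bar>\<xi>\<bar>))) \<bar>real_of_int (x i)\<bar>"
      using exists_toeplitz_stable_quot_coeff[OF k2 kn cases \<open>i \<le> k\<close>] \<open>2 \<le> \<bar>real_of_int (x i)\<bar>\<close> by simp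
  qed (use k2 in auto)
qed simp

text \<open>Transcendence of \<open>\<xi>\<close> enters only through \<open>\<xi> \<noteq> 0\<close>: the definitions of the exponents
  already impose \<open>0 < \<bar>P \<xi>\<bar>\<close>.\<close>
theorem theorem3p1:
  fixes k n :: nat and \<xi> :: real
  assumes "2 \<le> k" and "k \<le> n" and "\<not> algebraic \<xi>"
  shows "lambda_exp n \<xi> \<ge> bound_fun n k (w_lead_exp k \<xi>) \<and>
         ((k = 2 \<or> n = k + 1) \<longrightarrow> lambda_exp n \<xi> \<ge> bound_fun n k (w_exp k \<xi>))"
proof -
  have "\<xi> \<noteq> 0" using assms(3) by auto
  then show ?thesis
    using lambda_exp_ge_bound_w_lead_exp lambda_exp_ge_bound_w_exp assms(1,2) by blast
qed

end
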